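(* In the optimal stopping setting described in the context, under (S1)–(S4), on the set $\mathcal R$ the topology $\tau_p\otimes\bar\tau_p$ is contained in (i.e. is coarser than) the topology $\tau_p\otimes\tilde\tau_p$. In other words, on $\mathcal R$ convergence of the flow of measures in measure implies its convergence in the stable topology.
   Context: Fix $T>0$, an open set $\mathcal O\subseteq\mathbb R$ with closure $\bar{\mathcal O}$, and constants $r\in[0,2]$, $q\ge 2$ and $p$ with $q>p\ge\max(1,r)$. For a metric space $E$, $\mathcal P_p(E)$ (resp. $\mathcal P^{sub}_p(E)$) is the set of Borel probability (resp. subprobability) measures with finite $p$-th moment, with topology $\tau_p$: convergence against continuous test functions of growth at most $C(1+d(x,x_0)^p)$. $V_p$ is the set of families $m=(m_t)_{t\in[0,T]}$ of subprobability measures on $\bar{\mathcal O}$ with $t\mapsto m_t(B)$ measurable for Borel $B$ and $\int_0^T\int|x|^pm_t(dx)dt<\infty$, identified if equal for a.e. $t$. On $V_p$: $\bar\tau_p$ is the stable topology with $p$-growth, in which $m^n\to m$ iff $\int_0^T\int\phi(t,x)m^n_t(dx)dt\to\int_0^T\int\phi(t,x)m_t(dx)dt$ for all $\phi$ jointly measurable, continuous in $x$ for each $t$ and with $|\phi(t,x)|\le C(1+|x|^p)$; $\tilde\tau_p$ is the topology of convergence in Lebesgue measure of $t\mapsto m_t$ as maps into $(\mathcal P^{sub}_p(\bar{\mathcal O}),\tau_p)$. $\mathcal P_p([0,T]\times\bar{\mathcal O})$ carries $\tau_p$. (S1) $m_0^*\in\mathcal P_q(\bar{\mathcal O})$. (S2)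 $b,\sigma:[0,T]\times\mathbb R\to\mathbb R$ jointly measurable, continuous in $x$, with $|b(t,x)-b(t,y)|+|\sigma(t,x)-\sigma(t,y)|\le c_1|x-y|$, $|b(t,x)|\le c_1(1+|x|)$, $\sigma^2(t,x)\le c_1(1+|x|^r)$. (S3) (reward functions, irrelevant here) $f$, $g$ measurable/continuous with $p$-growth. (S4) Either (a) $\mathbb P(\tau^X_{\mathcal O}\ge T)=1$ where $X$ solves $dX_t=b(t,X_t)dt+\sigma(t,X_t)dW_t$, $X_0\sim m_0^*$, $\tau^X_{\mathcal O}=\inf\{t:X_t\notin\mathcal O\}$; or (b) $\mathcal O$ is a bounded open interval and $\sigma^2\ge c_\sigma>0$. $\mathcal R$ is the set of $(\mu,m)\in\mathcal P_p([0,T]\times\bar{\mathcal O})\times V_p$ with $\int u\,d\mu=\int_{\mathcal O}u(0,x)m_0^*(dx)+\int_0^T\int_{\bar{\mathcal O}}(\partial_tu+b\partial_xu+\tfrac{\sigma^2}{2}\partial_{xx}u)(t,x)m_t(dx)dt$ for all $u\in C^{1,2}_b([0,T]\times\bar{\mathcal O})$. *)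

theory Defs
  imports "HOL-Probability.Probability"
begin

text \<open>x^a for x \<ge> 0 with the convention 0^0 = 1 (Isabelle's powr has 0 powr 0 = 0).\<close>
definition mpow :: "real \<Rightarrow> real \<Rightarrow> real" where
  "mpow x a = (if a = 0 then 1 else x powr a)"

definition subprob_on :: "real set \<Rightarrow> real measure \<Rightarrow> bool" where
  "subprob_on S \<nu> \<longleftrightarrow> sets \<nu> = sets borel \<and> emeasure \<nu> UNIV \<le> 1 \<and> emeasure \<nu> (UNIV - S) = 0"

definition Pp_time_space :: "real \<Rightarrow> real \<Rightarrow> real set \<Rightarrow> (real \<times> real) measure \<Rightarrow> bool" where
  "Pp_time_space p T S \<mu> \<longleftrightarrow> prob_space \<mu> \<and> sets \<mu> = sets borel
     \<and> emeasure \<mu> (UNIV - ({0..T} \<times> S)) = 0 \<and> integrable \<mu> (\<lambda>z. norm z powr p)"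

definition conv_tau_p :: "real \<Rightarrow> 'a::real_normed_vector set \<Rightarrow> (nat \<Rightarrow> 'a measure) \<Rightarrow> 'a measure \<Rightarrow> bool" where
  "conv_tau_p p E \<nu>s \<nu> \<longleftrightarrow>
     (\<forall>(\<phi>::'a \<Rightarrow> real) C. continuous_on E \<phi> \<and> (\<forall>z\<in>E. \<bar>\<phi> z\<bar> \<le> C * (1 + norm z powr p)) \<longrightarrow>
        (\<lambda>n. LINT z:E|\<nu>s n. \<phi> z) \<longlonglongrightarrow> (LINT z:E|\<nu>. \<phi> z))"

definition Vp :: "real \<Rightarrow> real \<Rightarrow> real set \<Rightarrow> (real \<Rightarrow> real measure) \<Rightarrow> bool" where
  "Vp p T S m \<longleftrightarrow> (\<forall>t\<in>{0..T}. subprob_on S (m t))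
     \<and> (\<forall>B\<in>sets borel. (\<lambda>t. emeasure (m t) B) \<in> borel_measurable (restrict_space borel {0..T}))
     \<and> (\<integral>\<^sup>+ t. indicator {0..T} t * (\<integral>\<^sup>+ x. ennreal (\<bar>x\<bar> powr p) \<partial>(m t)) \<partial>lborel) < \<infinity>"

definition conv_stable :: "real \<Rightarrow> real \<Rightarrow> real set \<Rightarrow> (nat \<Rightarrow> real \<Rightarrow> real measure) \<Rightarrow> (real \<Rightarrow> real measure) \<Rightarrow> bool" where
  "conv_stable p T S ms m \<longleftrightarrow>
     (\<forall>(\<phi>::real \<times> real \<Rightarrow> real) C.
        \<phi> \<in> borel_measurable (restrict_space borel ({0..T} \<times> S))
        \<and> (\<forall>t\<in>{0..T}. continuous_on S (\<lambda>x. \<phi> (t, x)))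
        \<and> (\<forall>t\<in>{0..T}. \<forall>x\<in>S. \<bar>\<phi> (t, x)\<bar> \<le> C * (1 + \<bar>x\<bar> powr p)) \<longrightarrow>
        (\<lambda>n. LINT t:{0..T}|lborel. (LINT x:S|ms n t. \<phi> (t, x)))
          \<longlonglongrightarrow> (LINT t:{0..T}|lborel. (LINT x:S|m t. \<phi> (t, x))))"

text \<open>Sequential convergence in tilde-tau_p: convergence in Lebesgue measure on [0,T]
  of t \<mapsto> m_t as maps into the metrizable space (P^sub_p(S), tau_p).  On a finite
  measure space and a metrizable target this is expressed by the (metric-independent)
  criterion: every subsequence has a further subsequence converging for a.e. t.\<close>
definition conv_in_measure :: "real \<Rightarrow> real \<Rightarrow> real set \<Rightarrow> (nat \<Rightarrow> real \<Rightarrow> real measure) \<Rightarrow> (real \<Rightarrow> real measure) \<Rightarrow> bool" where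
  "conv_in_measure p T S ms m \<longleftrightarrow>
     (\<forall>r::nat \<Rightarrow> nat. strict_mono r \<longrightarrow>
        (\<exists>r'::nat \<Rightarrow> nat. strict_mono r' \<and>
           (AE t in lborel. t \<in> {0..T} \<longrightarrow> conv_tau_p p S (\<lambda>k. ms (r (r' k)) t) (m t))))"

definition C12b :: "real \<Rightarrow> real set \<Rightarrow> (real \<times> real \<Rightarrow> real) \<Rightarrow> (real \<times> real \<Rightarrow> real)
    \<Rightarrow> (real \<times> real \<Rightarrow> real) \<Rightarrow> (real \<times> real \<Rightarrow> real) \<Rightarrow> bool" where
  "C12b T S u ut ux uxx \<longleftrightarrow>
     (\<forall>t\<in>{0..T}. \<forall>x\<in>S.
        ((\<lambda>s. u (s, x)) has_real_derivative ut (t, x)) (at t within {0..T})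
      \<and> ((\<lambda>y. u (t, y)) has_real_derivative ux (t, x)) (at x within S)
      \<and> ((\<lambda>y. ux (t, y)) has_real_derivative uxx (t, x)) (at x within S))
   \<and> continuous_on ({0..T} \<times> S) u \<and> continuous_on ({0..T} \<times> S) ut
   \<and> continuous_on ({0..T} \<times> S) ux \<and> continuous_on ({0..T} \<times> S) uxx
   \<and> bounded (u ` ({0..T} \<times> S)) \<and> bounded (ut ` ({0..T} \<times> S))
   \<and> bounded (ux ` ({0..T} \<times> S)) \<and> bounded (uxx ` ({0..T} \<times> S))"

definition inR :: "real \<Rightarrow> real \<Rightarrow> real set \<Rightarrow> real measure \<Rightarrow> (real \<Rightarrow> real \<Rightarrow> real)
    \<Rightarrow> (real \<Rightarrow> real \<Rightarrow> real) \<Rightarrow> (real \<times> real) measure \<Rightarrow> (real \<Rightarrow> real measure) \<Rightarrow> bool" where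
  "inR p T Ob m0 b \<sigma> \<mu> m \<longleftrightarrow> Pp_time_space p T (closure Ob) \<mu> \<and> Vp p T (closure Ob) m \<and>
     (\<forall>u ut ux uxx. C12b T (closure Ob) u ut ux uxx \<longrightarrow>
        (LINT z:({0..T} \<times> closure Ob)|\<mu>. u z)
          = (LINT x:Ob|m0. u (0, x))
            + (LINT t:{0..T}|lborel. (LINT x:closure Ob|m t.
                 ut (t, x) + b t x * ux (t, x) + (\<sigma> t x)\<^sup>2 / 2 * uxx (t, x))))"

text \<open>(M, F, X) is a (weak) solution on [0,T] of dX = b dt + sigma dW with X_0 ~ m0,
  in the martingale-problem formulation: X is continuous, adapted to the filtration F,
  X_0 has law m0, and for every compactly supported C^2 function f,
  f(X_t) - f(X_0) - int_0^t (b f' + sigma^2/2 f'')(s, X_s) ds is an F-martingale.\<close>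
definition mp_solution :: "real \<Rightarrow> (real \<Rightarrow> real \<Rightarrow> real) \<Rightarrow> (real \<Rightarrow> real \<Rightarrow> real) \<Rightarrow> real measure
    \<Rightarrow> 'w measure \<Rightarrow> (real \<Rightarrow> 'w measure) \<Rightarrow> ('w \<Rightarrow> real \<Rightarrow> real) \<Rightarrow> bool" where
  "mp_solution T b \<sigma> m0 M F X \<longleftrightarrow> prob_space M
     \<and> (\<forall>t\<in>{0..T}. space (F t) = space M \<and> sets (F t) \<subseteq> sets M)
     \<and> (\<forall>s\<in>{0..T}. \<forall>t\<in>{0..T}. s \<le> t \<longrightarrow> sets (F s) \<subseteq> sets (F t))
     \<and> (\<forall>t\<in>{0..T}. (\<lambda>\<omega>. X \<omega> t) \<in> borel_measurable (F t))
     \<and> (\<forall>\<omega>\<in>space M. continuous_on {0..T} (X \<omega>))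
     \<and> distr M borel (\<lambda>\<omega>. X \<omega> 0) = m0
     \<and> (\<forall>(f::real \<Rightarrow> real) f' f''.
          (\<forall>x. (f has_real_derivative f' x) (at x) \<and> (f' has_real_derivative f'' x) (at x))
          \<and> continuous_on UNIV f'' \<and> (\<exists>K. compact K \<and> (\<forall>x. x \<notin> K \<longrightarrow> f x = 0)) \<longrightarrow>
          (let Y = (\<lambda>t \<omega>. f (X \<omega> t) - f (X \<omega> 0)
                     - (LINT s:{0..t}|lborel. b s (X \<omega> s) * f' (X \<omega> s)
                                              + (\<sigma> s (X \<omega> s))\<^sup>2 / 2 * f'' (X \<omega> s)))
           in (\<forall>t\<in>{0..T}. integrable M (Y t) \<and> Y t \<in> borel_measurable (F t))
            \<and> (\<forall>s\<in>{0..T}. \<forall>t\<in>{0..T}. s \<le> t \<longrightarrow>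
                 (\<forall>A\<in>sets (F s). (LINT \<omega>:A|M. Y t \<omega>) = (LINT \<omega>:A|M. Y s \<omega>)))))"

end

theory Submission
  imports Defs
begin

text \<open>Elements of \<open>\<R>\<close> have uniformly bounded \<open>q\<close>-th moments in space-time. Indeed the growth
  conditions on \<open>b\<close> and \<open>\<sigma>\<close> give \<open>L V \<le> K V\<close> for \<open>V(x) = (1 + x\<^sup>2)\<^sup>q\<^sup>/\<^sup>2\<close>; testing the
  constraint against \<open>e\<^sup>-\<^sup>\<beta>\<^sup>t g\<^sub>\<epsilon>(x)\<close> with \<open>\<beta> = K + 1\<close> and the bounded truncation
  \<open>g\<^sub>\<epsilon> = V / (1 + \<epsilon> V)\<close> bounds \<open>\<integral>\<integral> g\<^sub>\<epsilon> dm\<^sub>t dt\<close> by \<open>e\<^sup>\<beta>\<^sup>T 2\<^sup>q\<^sup>/\<^sup>2 (1 + \<integral> |x|\<^sup>q dm\<^sub>0\<^sup>*)\<close>,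
  and \<open>\<epsilon> \<down> 0\<close> bounds \<open>\<integral>\<integral> |x|\<^sup>q dm\<^sub>t dt\<close>.
  Since \<open>q > p\<close>, test functions of \<open>p\<close>-growth are then uniformly integrable: cutting them off
  outside \<open>|x| \<le> M\<close> costs \<open>O(M\<^sup>p\<^sup>-\<^sup>q)\<close> uniformly, and for the cut-off part the convergence of
  \<open>m\<^sup>n\<^sub>t\<close> to \<open>m\<^sub>t\<close> in \<open>\<tau>\<^sub>p\<close> for a.e. \<open>t\<close>, along a further subsequence of any subsequence, passes
  to the time integral by dominated convergence.
  Only the growth bounds of (S2) are needed; (S4) and the Lipschitz and continuity parts of (S2) are not.\<close>

section \<open>Integrals against flows of subprobability measures\<close>

definition p_growth :: "real \<Rightarrow> real \<Rightarrow> real set \<Rightarrow> (real \<times> real \<Rightarrow> real) \<Rightarrow> bool" where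
  "p_growth p T S \<psi> \<longleftrightarrow> \<psi> \<in> borel_measurable (restrict_space borel ({0..T} \<times> S))
     \<and> (\<exists>C. \<forall>t\<in>{0..T}. \<forall>x\<in>S. \<bar>\<psi> (t, x)\<bar> \<le> C * (1 + \<bar>x\<bar> powr p))"

definition flow_integral :: "real \<Rightarrow> real set \<Rightarrow> (real \<Rightarrow> real measure) \<Rightarrow> (real \<times> real \<Rightarrow> real) \<Rightarrow> real" where
  "flow_integral T S m \<psi> = (LINT t:{0..T}|lborel. (LINT x:S|m t. \<psi> (t, x)))"

definition flow_nn_integral :: "real \<Rightarrow> real set \<Rightarrow> (real \<Rightarrow> real measure) \<Rightarrow> (real \<Rightarrow> real) \<Rightarrow> ennreal" where
  "flow_nn_integral T S m f = (\<integral>\<^sup>+t. indicator {0..T} t * (\<integral>\<^sup>+x. indicator S x * ennreal (f x) \<partial>m t) \<partial>lborel)"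

text \<open>Extending a flow by the null measure outside \<open>[0,T]\<close> makes it a measurable kernel on all of \<open>\<real>\<close>.\<close>
definition flow_kernel :: "real \<Rightarrow> (real \<Rightarrow> real measure) \<Rightarrow> real \<Rightarrow> real measure" where
  "flow_kernel T m t = (if t \<in> {0..T} then m t else null_measure borel)"

lemma p_growthI:
  assumes "\<psi> \<in> borel_measurable (restrict_space borel ({0..T} \<times> S))"
    and "\<And>t x. t \<in> {0..T} \<Longrightarrow> x \<in> S \<Longrightarrow> \<bar>\<psi> (t, x)\<bar> \<le> C * (1 + \<bar>x\<bar> powr p)"
  shows "p_growth p T S \<psi>"
  using assms unfolding p_growth_def by blast

lemma p_growth_boundedI:
  assumes "\<psi> \<in> borel_measurable (restrict_space borel ({0..T} \<times> S))"
    and "\<And>t x. t \<in> {0..T} \<Longrightarrow> x \<in> S \<Longrightarrow> \<bar>\<psi> (t, x)\<bar> \<le> B"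
  shows "p_growth p T S \<psi>"
proof (rule p_growthI[OF assms(1)])
  fix t x assume "t \<in> {0..T}" "x \<in> S"
  with assms(2) have "\<bar>\<psi> (t, x)\<bar> \<le> B" .
  moreover have "B \<le> B * (1 + \<bar>x\<bar> powr p)"
    using \<open>\<bar>\<psi> (t, x)\<bar> \<le> B\<close> by (simp add: algebra_simps)
  ultimately show "\<bar>\<psi> (t, x)\<bar> \<le> B * (1 + \<bar>x\<bar> powr p)" by linarith
qed

lemma p_growth_cmult:
  assumes "p_growth p T S \<psi>"
  shows "p_growth p T S (\<lambda>z. c * \<psi> z)"
proof -
  obtain C where C: "\<forall>t\<in>{0..T}. \<forall>x\<in>S. \<bar>\<psi> (t, x)\<bar> \<le> C * (1 + \<bar>x\<bar> powr p)"
    and [measurable]: "\<psi> \<in> borel_measurable (restrict_space borel ({0..T} \<times> S))"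
    using assms by (auto simp: p_growth_def)
  show ?thesis
  proof (rule p_growthI[where C = "\<bar>c\<bar> * C"])
    fix t x assume "t \<in> {0..T}" "x \<in> S"
    then have "\<bar>c\<bar> * \<bar>\<psi> (t, x)\<bar> \<le> \<bar>c\<bar> * (C * (1 + \<bar>x\<bar> powr p))" using C by (intro mult_left_mono) auto
    then show "\<bar>c * \<psi> (t, x)\<bar> \<le> \<bar>c\<bar> * C * (1 + \<bar>x\<bar> powr p)" by (simp add: abs_mult mult.assoc)
  qed measurable
qed

lemma Vp_D:
  assumes "Vp p T S m" "t \<in> {0..T}"
  shows "sets (m t) = sets borel" "space (m t) = UNIV" "emeasure (m t) UNIV \<le> 1"
    "emeasure (m t) (UNIV - S) = 0"
proof -
  have "subprob_on S (m t)" using assms by (auto simp: Vp_def)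
  then show s: "sets (m t) = sets borel" "emeasure (m t) UNIV \<le> 1" "emeasure (m t) (UNIV - S) = 0"
    by (auto simp: subprob_on_def)
  show "space (m t) = UNIV" using sets_eq_imp_space_eq[OF s(1)] by simp
qed

lemma measurable_flow_kernel:
  assumes "Vp p T S m"
  shows "flow_kernel T m \<in> borel \<rightarrow>\<^sub>M subprob_algebra borel"
proof (rule measurable_subprob_algebra)
  fix t :: real
  show "subprob_space (flow_kernel T m t)"
    using Vp_D[OF assms]
    by (cases "t \<in> {0..T}") (auto simp: flow_kernel_def intro!: subprob_spaceI subprob_space_null_measure)
  show "sets (flow_kernel T m t) = sets borel"
    using Vp_D[OF assms] by (auto simp: flow_kernel_def)
next
  fix A :: "real set" assume "A \<in> sets borel"
  then have "(\<lambda>t. emeasure (m t) A) \<in> borel_measurable (restrict_space borel {0..T})"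
    using assms by (auto simp: Vp_def)
  then have "(\<lambda>t. emeasure (m t) A * indicator {0..T} t) \<in> borel_measurable borel"
    by (subst (asm) borel_measurable_restrict_space_iff_ennreal) auto
  moreover have "(\<lambda>t. emeasure (flow_kernel T m t) A) = (\<lambda>t. emeasure (m t) A * indicator {0..T} t)"
    by (auto simp: flow_kernel_def fun_eq_iff indicator_def)
  ultimately show "(\<lambda>t. emeasure (flow_kernel T m t) A) \<in> borel_measurable borel" by simp
qed

lemma borel_measurable_kernel_integral:
  fixes f :: "'a \<Rightarrow> 'b \<Rightarrow> real"
  assumes f[measurable]: "(\<lambda>(x, y). f x y) \<in> borel_measurable (M \<Otimes>\<^sub>M N)"
    and L[measurable]: "L \<in> M \<rightarrow>\<^sub>M subprob_algebra N"
  shows "(\<lambda>x. integral\<^sup>L (L x) (f x)) \<in> borel_measurable M"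
proof -
  define P where "P x = (\<integral>\<^sup>+y. ennreal (f x y) \<partial>L x)" for x
  define Q where "Q x = (\<integral>\<^sup>+y. ennreal (- f x y) \<partial>L x)" for x
  define A where "A x = (\<integral>\<^sup>+y. ennreal (norm (f x y)) \<partial>L x)" for x
  have [measurable]: "P \<in> borel_measurable M" "Q \<in> borel_measurable M" "A \<in> borel_measurable M"
    unfolding P_def Q_def A_def
    by (rule nn_integral_measurable_subprob_algebra2[OF _ L]; measurable)+
  have eq: "integral\<^sup>L (L x) (f x) = (if A x < \<infinity> then enn2real (P x) - enn2real (Q x) else 0)"
    if x: "x \<in> space M" for x
  proof -
    have "f x \<in> borel_measurable N"
      using measurable_compose[OF measurable_Pair1'[OF x] f] by simp
    then have "f x \<in> borel_measurable (L x)"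
      using sets_kernel[OF L x] by (simp cong: measurable_cong_sets)
    then show ?thesis
      by (cases "A x < \<infinity>")
        (auto simp: integrable_iff_bounded A_def P_def Q_def real_lebesgue_integral_def
          not_integrable_integral_eq)
  qed
  have "(\<lambda>x. if A x < \<infinity> then enn2real (P x) - enn2real (Q x) else 0) \<in> borel_measurable M"
    by measurable
  then show ?thesis by (rule measurable_cong[THEN iffD1, rotated]) (simp add: eq)
qed

lemma borel_measurable_extend_by_zero:
  fixes \<psi> :: "real \<times> real \<Rightarrow> real"
  assumes "closed S" "\<psi> \<in> borel_measurable (restrict_space borel ({0..T} \<times> S))"
  shows "(\<lambda>(t, x). indicator ({0..T} \<times> S) (t, x) * \<psi> (t, x)) \<in> borel_measurable (borel \<Otimes>\<^sub>M borel)"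
proof -
  have "{0..T} \<times> S \<in> sets borel" using \<open>closed S\<close> by (intro borel_closed closed_Times) auto
  then have "(\<lambda>z. indicator ({0..T} \<times> S) z * \<psi> z) \<in> borel_measurable borel"
    using assms(2) borel_measurable_restrict_space_iff[of "{0..T} \<times> S" borel \<psi>] by simp
  then show ?thesis by (simp add: borel_prod case_prod_beta')
qed

lemma borel_measurable_inner_integral:
  fixes \<psi> :: "real \<times> real \<Rightarrow> real"
  assumes "Vp p T S m" "closed S" "\<psi> \<in> borel_measurable (restrict_space borel ({0..T} \<times> S))"
  shows "(\<lambda>t. indicator {0..T} t * (LINT x:S|m t. \<psi> (t, x))) \<in> borel_measurable borel"
proof -
  let ?\<psi> = "\<lambda>t x. indicator ({0..T} \<times> S) (t, x) * \<psi> (t, x)"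
  have "(\<lambda>t. integral\<^sup>L (flow_kernel T m t) (?\<psi> t)) \<in> borel_measurable borel"
    using borel_measurable_extend_by_zero[OF assms(2,3)] measurable_flow_kernel[OF assms(1)]
    by (rule borel_measurable_kernel_integral)
  then have "(\<lambda>t. indicator {0..T} t * integral\<^sup>L (flow_kernel T m t) (?\<psi> t)) \<in> borel_measurable borel"
    by measurable
  moreover have "indicator {0..T} t * integral\<^sup>L (flow_kernel T m t) (?\<psi> t)
      = indicator {0..T} t * (LINT x:S|m t. \<psi> (t, x))" for t
    by (simp add: flow_kernel_def set_lebesgue_integral_def indicator_times indicator_def)
  ultimately show ?thesis by simp
qed

lemma borel_measurable_inner_nn_integral:
  assumes "Vp p T S m" "h \<in> borel_measurable borel"
  shows "(\<lambda>t. indicator {0..T} t * (\<integral>\<^sup>+x. h x \<partial>m t)) \<in> borel_measurable borel"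
proof -
  have "(\<lambda>t. indicator {0..T} t * (\<integral>\<^sup>+x. h x \<partial>flow_kernel T m t)) \<in> borel_measurable borel"
    using measurable_compose[OF measurable_flow_kernel[OF assms(1)]
        nn_integral_measurable_subprob_algebra[OF assms(2)]] by measurable
  moreover have "indicator {0..T} t * (\<integral>\<^sup>+x. h x \<partial>flow_kernel T m t)
      = indicator {0..T} t * (\<integral>\<^sup>+x. h x \<partial>m t)" for t
    by (simp add: flow_kernel_def indicator_def)
  ultimately show ?thesis by simp
qed

lemma AE_Vp_moment_finite:
  assumes "Vp p T S m"
  shows "AE t in lborel. t \<in> {0..T} \<longrightarrow> (\<integral>\<^sup>+x. ennreal (\<bar>x\<bar> powr p) \<partial>m t) < \<infinity>"
proof -
  have "(\<lambda>t. indicator {0..T} t * (\<integral>\<^sup>+x. ennreal (\<bar>x\<bar> powr p) \<partial>m t)) \<in> borel_measurable lborel"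
    using borel_measurable_inner_nn_integral[OF assms, of "\<lambda>x. ennreal (\<bar>x\<bar> powr p)"] by simp
  moreover have "(\<integral>\<^sup>+ t. indicator {0..T} t * (\<integral>\<^sup>+ x. ennreal (\<bar>x\<bar> powr p) \<partial>(m t)) \<partial>lborel) \<noteq> \<infinity>"
    using assms by (auto simp: Vp_def)
  ultimately show ?thesis
    by (rule nn_integral_PInf_AE[THEN AE_mp]) (auto simp: top.not_eq_extremum)
qed

lemma borel_measurable_section:
  fixes \<psi> :: "real \<times> real \<Rightarrow> real"
  assumes "Vp p T S m" "t \<in> {0..T}" "closed S"
    and "\<psi> \<in> borel_measurable (restrict_space borel ({0..T} \<times> S))"
  shows "(\<lambda>x. indicator S x * \<psi> (t, x)) \<in> borel_measurable (m t)"
proof -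
  have "(\<lambda>x. indicator ({0..T} \<times> S) (t, x) * \<psi> (t, x)) \<in> borel_measurable borel"
    using measurable_compose[OF measurable_Pair1'[of t borel borel]
        borel_measurable_extend_by_zero[OF assms(3,4)]] by simp
  moreover have "indicator ({0..T} \<times> S) (t, x) * \<psi> (t, x) = indicator S x * \<psi> (t, x)" for x
    using assms(2) by (simp add: indicator_times)
  ultimately show ?thesis using Vp_D[OF assms(1,2)] by (simp cong: measurable_cong_sets)
qed

lemma ennreal_abs_set_integral_le:
  fixes f :: "'a \<Rightarrow> real"
  shows "ennreal \<bar>LINT x:A|M. f x\<bar> \<le> (\<integral>\<^sup>+x. ennreal (indicator A x * \<bar>f x\<bar>) \<partial>M)"
proof (cases "set_integrable M A f")
  case True
  then show ?thesis
    using integral_norm_bound_ennreal[of M "\<lambda>x. indicator A x * f x"]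
    by (simp add: set_integrable_def set_lebesgue_integral_def abs_mult)
qed (simp add: set_integrable_def set_lebesgue_integral_def not_integrable_integral_eq)

lemma nn_integral_section_le:
  fixes \<psi> :: "real \<times> real \<Rightarrow> real"
  assumes Vp: "Vp p T S m" and t: "t \<in> {0..T}"
    and C: "\<And>x. x \<in> S \<Longrightarrow> \<bar>\<psi> (t, x)\<bar> \<le> C * (1 + \<bar>x\<bar> powr p)"
  shows "(\<integral>\<^sup>+x. ennreal (indicator S x * \<bar>\<psi> (t, x)\<bar>) \<partial>m t)
           \<le> ennreal \<bar>C\<bar> * (1 + (\<integral>\<^sup>+x. ennreal (\<bar>x\<bar> powr p) \<partial>m t))"
proof -
  have [measurable_cong]: "sets (m t) = sets borel" using Vp_D[OF Vp t] by simp
  have "(\<integral>\<^sup>+x. ennreal (indicator S x * \<bar>\<psi> (t, x)\<bar>) \<partial>m t)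
      \<le> (\<integral>\<^sup>+x. ennreal \<bar>C\<bar> * (1 + ennreal (\<bar>x\<bar> powr p)) \<partial>m t)"
  proof (rule nn_integral_mono)
    fix x
    have "indicator S x * \<bar>\<psi> (t, x)\<bar> \<le> \<bar>C\<bar> * (1 + \<bar>x\<bar> powr p)"
    proof (cases "x \<in> S")
      case True
      have "C * (1 + \<bar>x\<bar> powr p) \<le> \<bar>C\<bar> * (1 + \<bar>x\<bar> powr p)" by (intro mult_right_mono) auto
      with C[OF True] True show ?thesis by simp
    qed simp
    then have "ennreal (indicator S x * \<bar>\<psi> (t, x)\<bar>) \<le> ennreal (\<bar>C\<bar> * (1 + \<bar>x\<bar> powr p))"
      by (rule ennreal_leI)
    then show "ennreal (indicator S x * \<bar>\<psi> (t, x)\<bar>) \<le> ennreal \<bar>C\<bar> * (1 + ennreal (\<bar>x\<bar> powr p))"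
      by (simp add: ennreal_mult)
  qed
  also have "\<dots> = ennreal \<bar>C\<bar> * (\<integral>\<^sup>+x. 1 + ennreal (\<bar>x\<bar> powr p) \<partial>m t)"
    by (rule nn_integral_cmult) measurable
  also have "(\<integral>\<^sup>+x. 1 + ennreal (\<bar>x\<bar> powr p) \<partial>m t) = emeasure (m t) UNIV + (\<integral>\<^sup>+x. ennreal (\<bar>x\<bar> powr p) \<partial>m t)"
    by (subst nn_integral_add) (auto simp: Vp_D[OF Vp t])
  also have "ennreal \<bar>C\<bar> * (emeasure (m t) UNIV + (\<integral>\<^sup>+x. ennreal (\<bar>x\<bar> powr p) \<partial>m t))
      \<le> ennreal \<bar>C\<bar> * (1 + (\<integral>\<^sup>+x. ennreal (\<bar>x\<bar> powr p) \<partial>m t))"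
    using Vp_D(3)[OF Vp t] by (intro mult_left_mono add_right_mono) auto
  finally show ?thesis .
qed

lemma integrable_section:
  fixes \<psi> :: "real \<times> real \<Rightarrow> real"
  assumes Vp: "Vp p T S m" and t: "t \<in> {0..T}" and "closed S" and \<psi>: "p_growth p T S \<psi>"
    and fin: "(\<integral>\<^sup>+x. ennreal (\<bar>x\<bar> powr p) \<partial>m t) < \<infinity>"
  shows "set_integrable (m t) S (\<lambda>x. \<psi> (t, x))"
proof -
  obtain C where C: "\<forall>t\<in>{0..T}. \<forall>x\<in>S. \<bar>\<psi> (t, x)\<bar> \<le> C * (1 + \<bar>x\<bar> powr p)"
    using \<psi> by (auto simp: p_growth_def)
  have "ennreal \<bar>C\<bar> * (1 + (\<integral>\<^sup>+x. ennreal (\<bar>x\<bar> powr p) \<partial>m t)) < \<infinity>"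
    using fin by (simp add: ennreal_mult_less_top)
  with nn_integral_section_le[OF Vp t, of \<psi> C] C t
  have "(\<integral>\<^sup>+x. ennreal (indicator S x * \<bar>\<psi> (t, x)\<bar>) \<partial>m t) < \<infinity>"
    by (auto intro: le_less_trans)
  with borel_measurable_section[OF Vp t \<open>closed S\<close>] \<psi> show ?thesis
    by (simp add: set_integrable_def integrable_iff_bounded p_growth_def abs_mult)
qed

lemma set_integrable_inner_integral:
  fixes \<psi> :: "real \<times> real \<Rightarrow> real"
  assumes Vp: "Vp p T S m" and "closed S" and \<psi>: "p_growth p T S \<psi>"
  shows "set_integrable lborel {0..T} (\<lambda>t. LINT x:S|m t. \<psi> (t, x))"
  unfolding set_integrable_def integrable_iff_bounded
proof
  show "(\<lambda>t. indicator {0..T} t *\<^sub>R (LINT x:S|m t. \<psi> (t, x))) \<in> borel_measurable lborel"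
    using borel_measurable_inner_integral[OF Vp \<open>closed S\<close>] \<psi> by (simp add: p_growth_def)
  obtain C where C: "\<forall>t\<in>{0..T}. \<forall>x\<in>S. \<bar>\<psi> (t, x)\<bar> \<le> C * (1 + \<bar>x\<bar> powr p)"
    using \<psi> by (auto simp: p_growth_def)
  define M where "M t = (\<integral>\<^sup>+x. ennreal (\<bar>x\<bar> powr p) \<partial>m t)" for t
  have [measurable]: "(\<lambda>t. indicator {0..T} t * M t) \<in> borel_measurable borel"
    unfolding M_def by (rule borel_measurable_inner_nn_integral[OF Vp]) measurable
  have "(\<integral>\<^sup>+t. ennreal (norm (indicator {0..T} t *\<^sub>R (LINT x:S|m t. \<psi> (t, x)))) \<partial>lborel)
     \<le> (\<integral>\<^sup>+t. ennreal \<bar>C\<bar> * (indicator {0..T} t + indicator {0..T} t * M t) \<partial>lborel)"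
  proof (rule nn_integral_mono)
    fix t
    show "ennreal (norm (indicator {0..T} t *\<^sub>R (LINT x:S|m t. \<psi> (t, x))))
        \<le> ennreal \<bar>C\<bar> * (indicator {0..T} t + indicator {0..T} t * M t)"
    proof (cases "t \<in> {0..T}")
      case t: True
      have "ennreal \<bar>LINT x:S|m t. \<psi> (t, x)\<bar> \<le> (\<integral>\<^sup>+x. ennreal (indicator S x * \<bar>\<psi> (t, x)\<bar>) \<partial>m t)"
        by (rule ennreal_abs_set_integral_le)
      also have "\<dots> \<le> ennreal \<bar>C\<bar> * (1 + M t)"
        using nn_integral_section_le[OF Vp t, of \<psi> C] C t by (simp add: M_def)
      finally show ?thesis using t by simp
    qed simp
  qed
  also have "\<dots> = ennreal \<bar>C\<bar> * (emeasure lborel {0..T} + (\<integral>\<^sup>+t. indicator {0..T} t * M t \<partial>lborel))"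
    by (subst nn_integral_cmult) (auto simp: nn_integral_add)
  also have "\<dots> < \<infinity>"
  proof -
    have "(\<integral>\<^sup>+t. indicator {0..T} t * M t \<partial>lborel) < \<infinity>"
      using Vp by (simp add: Vp_def M_def)
    moreover have "emeasure lborel {0..T} < \<infinity>" by (cases "0 \<le> T") auto
    ultimately show ?thesis by (simp add: ennreal_mult_less_top)
  qed
  finally show "(\<integral>\<^sup>+t. ennreal (norm (indicator {0..T} t *\<^sub>R (LINT x:S|m t. \<psi> (t, x)))) \<partial>lborel) < \<infinity>" .
qed

lemma flow_integral_add:
  fixes \<psi>1 \<psi>2 :: "real \<times> real \<Rightarrow> real"
  assumes Vp: "Vp p T S m" and S: "closed S" and \<psi>1: "p_growth p T S \<psi>1" and \<psi>2: "p_growth p T S \<psi>2"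
  shows "flow_integral T S m (\<lambda>z. \<psi>1 z + \<psi>2 z) = flow_integral T S m \<psi>1 + flow_integral T S m \<psi>2"
proof -
  have [measurable]: "\<psi>1 \<in> borel_measurable (restrict_space borel ({0..T} \<times> S))"
    "\<psi>2 \<in> borel_measurable (restrict_space borel ({0..T} \<times> S))"
    using \<psi>1 \<psi>2 by (auto simp: p_growth_def)
  have "AE t in lborel. indicator {0..T} t * (LINT x:S|m t. \<psi>1 (t, x) + \<psi>2 (t, x))
      = indicator {0..T} t * ((LINT x:S|m t. \<psi>1 (t, x)) + (LINT x:S|m t. \<psi>2 (t, x)))"
    using AE_Vp_moment_finite[OF Vp]
  proof eventually_elim
    case (elim t)
    show ?case
    proof (cases "t \<in> {0..T}")
      case t: True
      then show ?thesis
        using set_integral_add(2)[OF integrable_section[OF Vp t S \<psi>1] integrable_section[OF Vp t S \<psi>2]] elim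
        by simp
    qed simp
  qed
  then have "(LINT t:{0..T}|lborel. (LINT x:S|m t. \<psi>1 (t, x) + \<psi>2 (t, x)))
      = (LINT t:{0..T}|lborel. (LINT x:S|m t. \<psi>1 (t, x)) + (LINT x:S|m t. \<psi>2 (t, x)))"
    unfolding set_lebesgue_integral_def[of lborel "{0..T}"]
    using borel_measurable_inner_integral[OF Vp S, of "\<lambda>z. \<psi>1 z + \<psi>2 z"]
      borel_measurable_inner_integral[OF Vp S, of \<psi>1] borel_measurable_inner_integral[OF Vp S, of \<psi>2]
    by (intro integral_cong_AE) (auto simp: distrib_left)
  also have "\<dots> = (LINT t:{0..T}|lborel. (LINT x:S|m t. \<psi>1 (t, x))) + (LINT t:{0..T}|lborel. (LINT x:S|m t. \<psi>2 (t, x)))"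
    by (rule set_integral_add(2)[OF set_integrable_inner_integral[OF Vp S \<psi>1] set_integrable_inner_integral[OF Vp S \<psi>2]])
  finally show ?thesis by (simp add: flow_integral_def)
qed

lemma flow_integral_cmult: "flow_integral T S m (\<lambda>z. c * \<psi> z) = c * flow_integral T S m \<psi>"
  by (simp add: flow_integral_def)

lemma flow_integral_mono:
  fixes \<psi>1 \<psi>2 :: "real \<times> real \<Rightarrow> real"
  assumes Vp: "Vp p T S m" and S: "closed S" and \<psi>1: "p_growth p T S \<psi>1" and \<psi>2: "p_growth p T S \<psi>2"
    and le: "\<And>t x. t \<in> {0..T} \<Longrightarrow> x \<in> S \<Longrightarrow> \<psi>1 (t, x) \<le> \<psi>2 (t, x)"
  shows "flow_integral T S m \<psi>1 \<le> flow_integral T S m \<psi>2"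
  unfolding flow_integral_def
proof (rule set_integral_mono_AE[OF set_integrable_inner_integral[OF Vp S \<psi>1] set_integrable_inner_integral[OF Vp S \<psi>2]])
  show "AE t\<in>{0..T} in lborel. (LINT x:S|m t. \<psi>1 (t, x)) \<le> (LINT x:S|m t. \<psi>2 (t, x))"
    using AE_Vp_moment_finite[OF Vp]
  proof eventually_elim
    case (elim t)
    show ?case
    proof
      assume t: "t \<in> {0..T}"
      with elim show "(LINT x:S|m t. \<psi>1 (t, x)) \<le> (LINT x:S|m t. \<psi>2 (t, x))"
        by (intro set_integral_mono integrable_section[OF Vp t S \<psi>1] integrable_section[OF Vp t S \<psi>2] le)
          auto
    qed
  qed
qed

lemma abs_inner_integral_le:
  fixes \<psi> :: "real \<times> real \<Rightarrow> real"
  assumes Vp: "Vp p T S m" and t: "t \<in> {0..T}" and "0 \<le> B"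
    and B: "\<And>x. x \<in> S \<Longrightarrow> \<bar>\<psi> (t, x)\<bar> \<le> B"
  shows "\<bar>LINT x:S|m t. \<psi> (t, x)\<bar> \<le> B"
proof -
  have "ennreal \<bar>LINT x:S|m t. \<psi> (t, x)\<bar> \<le> (\<integral>\<^sup>+x. ennreal (indicator S x * \<bar>\<psi> (t, x)\<bar>) \<partial>m t)"
    by (rule ennreal_abs_set_integral_le)
  also have "\<dots> \<le> (\<integral>\<^sup>+x. ennreal B \<partial>m t)"
    using B \<open>0 \<le> B\<close> by (intro nn_integral_mono) (auto simp: indicator_def intro!: ennreal_leI)
  also have "\<dots> = ennreal B * emeasure (m t) UNIV" using Vp_D[OF Vp t] by simp
  also have "\<dots> \<le> ennreal B" using Vp_D(3)[OF Vp t] mult_left_mono[of _ 1 "ennreal B"] by simp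
  finally show ?thesis using \<open>0 \<le> B\<close> by simp
qed

lemma abs_flow_integral_le:
  fixes \<psi> :: "real \<times> real \<Rightarrow> real"
  assumes Vp: "Vp p T S m" and "closed S" and W: "W \<in> borel_measurable borel" and c: "0 \<le> c"
    and \<psi>: "\<And>t x. t \<in> {0..T} \<Longrightarrow> x \<in> S \<Longrightarrow> \<bar>\<psi> (t, x)\<bar> \<le> c * W x"
  shows "ennreal \<bar>flow_integral T S m \<psi>\<bar> \<le> ennreal c * flow_nn_integral T S m W"
proof -
  have S[measurable]: "S \<in> sets borel" using \<open>closed S\<close> by auto
  have inner: "ennreal \<bar>LINT x:S|m t. \<psi> (t, x)\<bar> \<le> ennreal c * (\<integral>\<^sup>+x. indicator S x * ennreal (W x) \<partial>m t)"
    if t: "t \<in> {0..T}" for t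
  proof -
    have [measurable_cong]: "sets (m t) = sets borel" using Vp_D[OF Vp t] by simp
    have "ennreal \<bar>LINT x:S|m t. \<psi> (t, x)\<bar> \<le> (\<integral>\<^sup>+x. ennreal (indicator S x * \<bar>\<psi> (t, x)\<bar>) \<partial>m t)"
      by (rule ennreal_abs_set_integral_le)
    also have "\<dots> \<le> (\<integral>\<^sup>+x. ennreal c * (indicator S x * ennreal (W x)) \<partial>m t)"
      using \<psi>[OF t] c by (intro nn_integral_mono) (auto simp: indicator_def simp flip: ennreal_mult' intro!: ennreal_leI)
    also have "\<dots> = ennreal c * (\<integral>\<^sup>+x. indicator S x * ennreal (W x) \<partial>m t)"
      using W by (intro nn_integral_cmult) measurable
    finally show ?thesis .
  qed
  have "(\<lambda>t. indicator {0..T} t * (\<integral>\<^sup>+x. indicator S x * ennreal (W x) \<partial>m t)) \<in> borel_measurable borel"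
    using W by (intro borel_measurable_inner_nn_integral[OF Vp]) measurable
  then have "ennreal c * flow_nn_integral T S m W
      = (\<integral>\<^sup>+t. ennreal c * (indicator {0..T} t * (\<integral>\<^sup>+x. indicator S x * ennreal (W x) \<partial>m t)) \<partial>lborel)"
    by (simp add: flow_nn_integral_def nn_integral_cmult)
  moreover have "ennreal \<bar>flow_integral T S m \<psi>\<bar>
      \<le> (\<integral>\<^sup>+t. ennreal (indicator {0..T} t * \<bar>LINT x:S|m t. \<psi> (t, x)\<bar>) \<partial>lborel)"
    unfolding flow_integral_def by (rule ennreal_abs_set_integral_le)
  moreover have "\<dots> \<le> (\<integral>\<^sup>+t. ennreal c * (indicator {0..T} t * (\<integral>\<^sup>+x. indicator S x * ennreal (W x) \<partial>m t)) \<partial>lborel)"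
    using inner by (intro nn_integral_mono) (auto simp: indicator_def)
  ultimately show ?thesis by simp
qed

lemma flow_nn_integral_eq_flow_integral:
  fixes f :: "real \<Rightarrow> real"
  assumes Vp: "Vp p T S m" and S: "closed S" and f: "p_growth p T S (\<lambda>z. f (snd z))" and nonneg: "\<And>x. 0 \<le> f x"
  shows "flow_nn_integral T S m f = ennreal (flow_integral T S m (\<lambda>z. f (snd z)))"
proof -
  define G where "G t = (LINT x:S|m t. f x)" for t
  have "flow_nn_integral T S m f = (\<integral>\<^sup>+t. ennreal (indicator {0..T} t * G t) \<partial>lborel)"
    unfolding flow_nn_integral_def
  proof (rule nn_integral_cong_AE)
    show "AE t in lborel. indicator {0..T} t * (\<integral>\<^sup>+x. indicator S x * ennreal (f x) \<partial>m t)
        = ennreal (indicator {0..T} t * G t)"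
      using AE_Vp_moment_finite[OF Vp]
    proof eventually_elim
      case (elim t)
      show ?case
      proof (cases "t \<in> {0..T}")
        case t: True
        have "integrable (m t) (\<lambda>x. indicator S x * f x)"
          using integrable_section[OF Vp t S f] elim t by (simp add: set_integrable_def)
        then have "ennreal (G t) = (\<integral>\<^sup>+x. ennreal (indicator S x * f x) \<partial>m t)"
          unfolding G_def set_lebesgue_integral_def using nonneg by (subst nn_integral_eq_integral) auto
        also have "\<dots> = (\<integral>\<^sup>+x. indicator S x * ennreal (f x) \<partial>m t)"
          by (intro nn_integral_cong) (auto split: split_indicator)
        finally show ?thesis using t by simp
      qed simp
    qed
  qed
  also have "\<dots> = ennreal (LINT t:{0..T}|lborel. G t)"
    using set_integrable_inner_integral[OF Vp S f] nonneg
    by (auto simp: set_integrable_def set_lebesgue_integral_def G_def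
        intro!: nn_integral_eq_integral integral_nonneg_AE)
  finally show ?thesis by (simp add: flow_integral_def G_def)
qed

lemma flow_integral_tendsto_bounded:
  fixes \<psi> :: "real \<times> real \<Rightarrow> real"
  assumes S: "closed S" and Vps: "\<And>k. Vp p T S (ms k)" and Vp: "Vp p T S m"
    and \<psi>: "\<psi> \<in> borel_measurable (restrict_space borel ({0..T} \<times> S))" and "0 \<le> B"
    and B: "\<And>t x. t \<in> {0..T} \<Longrightarrow> x \<in> S \<Longrightarrow> \<bar>\<psi> (t, x)\<bar> \<le> B"
    and lim: "AE t in lborel. t \<in> {0..T} \<longrightarrow>
      (\<lambda>k. LINT x:S|ms k t. \<psi> (t, x)) \<longlonglongrightarrow> (LINT x:S|m t. \<psi> (t, x))"
  shows "(\<lambda>k. flow_integral T S (ms k) \<psi>) \<longlonglongrightarrow> flow_integral T S m \<psi>"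
  unfolding flow_integral_def set_lebesgue_integral_def[of lborel "{0..T}"]
proof (rule integral_dominated_convergence[where w="\<lambda>t. B * indicator {0..T} t"])
  show "(\<lambda>t. indicator {0..T} t *\<^sub>R (LINT x:S|m t. \<psi> (t, x))) \<in> borel_measurable lborel"
    using borel_measurable_inner_integral[OF Vp S \<psi>] by simp
  show "(\<lambda>t. indicator {0..T} t *\<^sub>R (LINT x:S|ms k t. \<psi> (t, x))) \<in> borel_measurable lborel" for k
    using borel_measurable_inner_integral[OF Vps S \<psi>] by simp
  show "integrable lborel (\<lambda>t. B * indicator {0..T} t)"
    by (rule borel_integrable_atLeastAtMost) auto
  show "AE t in lborel. (\<lambda>k. indicator {0..T} t *\<^sub>R (LINT x:S|ms k t. \<psi> (t, x)))
      \<longlonglongrightarrow> indicator {0..T} t *\<^sub>R (LINT x:S|m t. \<psi> (t, x))"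
    using lim by eventually_elim (auto simp: indicator_def)
  show "AE t in lborel. norm (indicator {0..T} t *\<^sub>R (LINT x:S|ms k t. \<psi> (t, x))) \<le> B * indicator {0..T} t" for k
    using abs_inner_integral_le[OF Vps _ \<open>0 \<le> B\<close>, of _ \<psi>] B \<open>0 \<le> B\<close>
    by (intro AE_I2) (auto simp: indicator_def)
qed

lemma flow_nn_integral_SUP:
  assumes Vp: "Vp p T S m" and "closed S" and f: "\<And>n. f n \<in> borel_measurable borel"
    and inc: "\<And>x. incseq (\<lambda>n. f n x)" and lim: "\<And>x. (\<lambda>n. f n x) \<longlonglongrightarrow> g x"
  shows "flow_nn_integral T S m g = (SUP n. flow_nn_integral T S m (f n))"
proof -
  have [measurable]: "S \<in> sets borel" using \<open>closed S\<close> by auto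
  define F where "F n t = indicator {0..T} t * (\<integral>\<^sup>+x. indicator S x * ennreal (f n x) \<partial>m t)" for n t
  have inc_ennreal: "incseq (\<lambda>n x. indicator S x * ennreal (f n x))"
    using inc by (auto simp: incseq_def le_fun_def intro!: mult_left_mono ennreal_leI)
  have "ennreal (g x) = (SUP n. ennreal (f n x))" for x
  proof -
    have "incseq (\<lambda>n. ennreal (f n x))" using inc[of x] by (auto simp: incseq_def intro: ennreal_leI)
    from LIMSEQ_unique[OF LIMSEQ_SUP[OF this] tendsto_ennrealI[OF lim]] show ?thesis by simp
  qed
  then have pointwise: "indicator S x * ennreal (g x) = (SUP n. indicator S x * ennreal (f n x))" for x
    by (simp add: SUP_mult_left_ennreal)
  have inner: "indicator {0..T} t * (\<integral>\<^sup>+x. indicator S x * ennreal (g x) \<partial>m t) = (SUP n. F n t)" for t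
  proof (cases "t \<in> {0..T}")
    case t: True
    have [measurable_cong]: "sets (m t) = sets borel" using Vp_D[OF Vp t] by simp
    have "(\<integral>\<^sup>+x. indicator S x * ennreal (g x) \<partial>m t) = (SUP n. (\<integral>\<^sup>+x. indicator S x * ennreal (f n x) \<partial>m t))"
      unfolding pointwise using f by (intro nn_integral_monotone_convergence_SUP[OF inc_ennreal]) measurable
    then show ?thesis using t by (simp add: F_def)
  qed (simp add: F_def)
  have incF: "incseq F"
    using inc by (auto simp: incseq_def le_fun_def F_def intro!: mult_left_mono nn_integral_mono ennreal_leI)
  have measF: "F n \<in> borel_measurable lborel" for n
    unfolding F_def using f by (simp, intro borel_measurable_inner_nn_integral[OF Vp]) measurable
  from nn_integral_monotone_convergence_SUP[OF incF measF] show ?thesis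
    unfolding flow_nn_integral_def inner by (simp add: F_def[abs_def])
qed

lemma flow_nn_integral_mono:
  "(\<And>x. f x \<le> g x) \<Longrightarrow> flow_nn_integral T S m f \<le> flow_nn_integral T S m g"
  unfolding flow_nn_integral_def
  by (intro nn_integral_mono mult_left_mono ennreal_leI) auto

section \<open>The Lyapunov function \<open>(1 + x\<^sup>2)\<^sup>a\<close>\<close>

definition lyap :: "real \<Rightarrow> real \<Rightarrow> real" where
  "lyap a x = (1 + x\<^sup>2) powr a"

definition lyap' :: "real \<Rightarrow> real \<Rightarrow> real" where
  "lyap' a x = 2 * a * x * (1 + x\<^sup>2) powr (a - 1)"

definition lyap'' :: "real \<Rightarrow> real \<Rightarrow> real" where
  "lyap'' a x = 2 * a * (1 + x\<^sup>2) powr (a - 1) + 4 * a * (a - 1) * x\<^sup>2 * (1 + x\<^sup>2) powr (a - 2)"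

text \<open>Truncations of \<open>lyap a\<close> with bounded derivatives, so that \<open>e\<^sup>-\<^sup>\<beta>\<^sup>t g\<^sub>\<epsilon>(x)\<close> is an admissible
  test function in the constraint defining \<open>\<R>\<close>; they increase to \<open>lyap a\<close> as \<open>\<epsilon> \<down> 0\<close>.\<close>

definition trunc_lyap :: "real \<Rightarrow> real \<Rightarrow> real \<Rightarrow> real" where
  "trunc_lyap a e x = lyap a x / (1 + e * lyap a x)"

definition trunc_lyap' :: "real \<Rightarrow> real \<Rightarrow> real \<Rightarrow> real" where
  "trunc_lyap' a e x = lyap' a x / (1 + e * lyap a x)\<^sup>2"

definition trunc_lyap'' :: "real \<Rightarrow> real \<Rightarrow> real \<Rightarrow> real" where
  "trunc_lyap'' a e x = lyap'' a x / (1 + e * lyap a x)\<^sup>2 - 2 * e * (lyap' a x)\<^sup>2 / (1 + e * lyap a x) ^ 3"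

lemma one_plus_square_pos: "0 < 1 + (x::real)\<^sup>2"
  by (simp add: add_pos_nonneg)

lemma powr_eq_mult_powr_diff_one: "0 \<le> (w::real) \<Longrightarrow> w powr a = w * w powr (a - 1)"
  using powr_mult_base[of w "a - 1"] by simp

lemma abs_le_one_plus_square: "\<bar>x::real\<bar> \<le> 1 + x\<^sup>2"
proof (cases "\<bar>x\<bar> \<le> 1")
  case False
  then have "\<bar>x\<bar> * 1 \<le> \<bar>x\<bar> * \<bar>x\<bar>" by (intro mult_left_mono) auto
  then show ?thesis by (simp add: power2_eq_square)
qed (simp add: add_increasing2)

lemma mpow_le_one_plus_square:
  assumes "0 \<le> r" "r \<le> 2"
  shows "mpow \<bar>x\<bar> r \<le> 1 + x\<^sup>2"
proof (cases "r = 0 \<or> \<bar>x\<bar> \<le> 1")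
  case True
  moreover have "\<bar>x\<bar> \<le> 1 \<Longrightarrow> \<bar>x\<bar> powr r \<le> 1"
    using assms powr_mono2[of r "\<bar>x\<bar>" 1] by simp
  ultimately show ?thesis by (auto simp: mpow_def add_increasing2)
next
  case False
  then have "\<bar>x\<bar> powr r \<le> \<bar>x\<bar> powr 2" using assms by (intro powr_mono) auto
  also have "\<dots> = x\<^sup>2" using False by simp
  finally show ?thesis using False by (simp add: mpow_def)
qed

lemma lyap_ge_one: "0 \<le> a \<Longrightarrow> 1 \<le> lyap a x"
  unfolding lyap_def by (simp add: ge_one_powr_ge_zero)

lemma lyap_has_derivative: "(lyap a has_real_derivative lyap' a x) (at x)"
  unfolding lyap_def[abs_def]
  using one_plus_square_pos[of x] by (auto intro!: derivative_eq_intros simp: lyap'_def algebra_simps)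

lemma lyap'_has_derivative: "(lyap' a has_real_derivative lyap'' a x) (at x)"
proof -
  have "((\<lambda>x. 2 * a * x * (1 + x\<^sup>2) powr (a - 1)) has_real_derivative
      2 * a * (1 + x\<^sup>2) powr (a - 1) + 2 * a * x * ((a - 1) * (1 + x\<^sup>2) powr (a - 1 - 1) * (2 * x))) (at x)"
    using one_plus_square_pos[of x] by (auto intro!: derivative_eq_intros)
  moreover have "2 * a * (1 + x\<^sup>2) powr (a - 1) + 2 * a * x * ((a - 1) * (1 + x\<^sup>2) powr (a - 1 - 1) * (2 * x))
      = lyap'' a x"
    unfolding lyap''_def by (simp add: power2_eq_square algebra_simps)
  ultimately show ?thesis unfolding lyap'_def[abs_def] by simp
qed

lemma trunc_denominator_ge_one: "0 \<le> e \<Longrightarrow> 0 \<le> a \<Longrightarrow> 1 \<le> 1 + e * lyap a x"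
  using lyap_ge_one[of a x] by simp

lemma trunc_lyap_has_derivative:
  assumes "0 \<le> e" "0 \<le> a"
  shows "(trunc_lyap a e has_real_derivative trunc_lyap' a e x) (at x)"
proof -
  have D: "1 + e * lyap a x \<noteq> 0" using trunc_denominator_ge_one[OF assms, of x] by linarith
  have "((\<lambda>x. lyap a x / (1 + e * lyap a x)) has_real_derivative
      (lyap' a x * (1 + e * lyap a x) - lyap a x * (e * lyap' a x)) / ((1 + e * lyap a x) * (1 + e * lyap a x))) (at x)"
    using D by (auto intro!: derivative_eq_intros lyap_has_derivative)
  moreover have "(lyap' a x * (1 + e * lyap a x) - lyap a x * (e * lyap' a x)) / ((1 + e * lyap a x) * (1 + e * lyap a x))
      = trunc_lyap' a e x"
    unfolding trunc_lyap'_def by (simp add: power2_eq_square algebra_simps)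
  ultimately show ?thesis unfolding trunc_lyap_def[abs_def] by simp
qed

lemma trunc_lyap'_has_derivative:
  assumes "0 \<le> e" "0 \<le> a"
  shows "(trunc_lyap' a e has_real_derivative trunc_lyap'' a e x) (at x)"
proof -
  define D where "D = 1 + e * lyap a x"
  have D: "D \<noteq> 0" using trunc_denominator_ge_one[OF assms, of x] by (simp add: D_def)
  have "((\<lambda>x. lyap' a x / (1 + e * lyap a x)\<^sup>2) has_real_derivative
      (lyap'' a x * D\<^sup>2 - lyap' a x * (2 * D * (e * lyap' a x))) / (D\<^sup>2 * D\<^sup>2)) (at x)"
    using D unfolding D_def
    by (auto intro!: derivative_eq_intros lyap_has_derivative lyap'_has_derivative simp: power2_eq_square)
  moreover have "(lyap'' a x * D\<^sup>2 - lyap' a x * (2 * D * (e * lyap' a x))) / (D\<^sup>2 * D\<^sup>2) = trunc_lyap'' a e x"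
    using D unfolding trunc_lyap''_def D_def[symmetric]
    by (simp add: field_simps power2_eq_square power3_eq_cube)
  ultimately show ?thesis unfolding trunc_lyap'_def[abs_def] by simp
qed

lemma continuous_on_lyap: "continuous_on UNIV (lyap a)"
  using lyap_has_derivative by (intro continuous_at_imp_continuous_on) (auto intro: DERIV_isCont)

lemma continuous_on_lyap': "continuous_on UNIV (lyap' a)"
  using lyap'_has_derivative by (intro continuous_at_imp_continuous_on) (auto intro: DERIV_isCont)

lemma continuous_on_lyap'': "continuous_on UNIV (lyap'' a)"
  using one_plus_square_pos unfolding lyap''_def[abs_def]
  by (intro continuous_intros) (auto simp: less_imp_neq[symmetric])

lemma continuous_on_trunc_lyap: "0 \<le> e \<Longrightarrow> 0 \<le> a \<Longrightarrow> continuous_on UNIV (trunc_lyap a e)"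
  using trunc_lyap_has_derivative by (intro continuous_at_imp_continuous_on) (auto intro: DERIV_isCont)

lemma continuous_on_trunc_lyap'':
  assumes "0 \<le> e" "0 \<le> a"
  shows "continuous_on UNIV (trunc_lyap'' a e)"
proof -
  have "1 + e * lyap a x \<noteq> 0" for x using trunc_denominator_ge_one[OF assms, of x] by linarith
  then show ?thesis unfolding trunc_lyap''_def[abs_def]
    by (intro continuous_intros continuous_on_lyap[THEN continuous_on_subset]
        continuous_on_lyap'[THEN continuous_on_subset] continuous_on_lyap''[THEN continuous_on_subset]) auto
qed

lemma abs_lyap'_le: "0 \<le> a \<Longrightarrow> \<bar>lyap' a x\<bar> \<le> 2 * a * lyap a x"
proof -
  assume "0 \<le> a"
  have "\<bar>lyap' a x\<bar> = 2 * a * \<bar>x\<bar> * (1 + x\<^sup>2) powr (a - 1)"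
    using \<open>0 \<le> a\<close> by (simp add: lyap'_def abs_mult)
  also have "\<dots> \<le> 2 * a * (1 + x\<^sup>2) * (1 + x\<^sup>2) powr (a - 1)"
    using \<open>0 \<le> a\<close> abs_le_one_plus_square[of x] by (intro mult_right_mono mult_left_mono) auto
  also have "\<dots> = 2 * a * lyap a x"
    using powr_eq_mult_powr_diff_one[of "1 + x\<^sup>2" a] by (simp add: lyap_def)
  finally show ?thesis .
qed

lemma lyap''_bounds:
  assumes a: "1 \<le> a"
  shows "0 \<le> lyap'' a x" "lyap'' a x \<le> (2 * a + 4 * a * (a - 1)) * (1 + x\<^sup>2) powr (a - 1)"
    "lyap'' a x \<le> (2 * a + 4 * a * (a - 1)) * lyap a x"
proof -
  have P: "0 \<le> (1 + x\<^sup>2) powr (a - 1)" "0 \<le> (1 + x\<^sup>2) powr (a - 2)" by simp_all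
  show "0 \<le> lyap'' a x" unfolding lyap''_def using a P by (intro add_nonneg_nonneg mult_nonneg_nonneg) auto
  have "x\<^sup>2 * (1 + x\<^sup>2) powr (a - 2) \<le> (1 + x\<^sup>2) * (1 + x\<^sup>2) powr (a - 2)"
    using P by (intro mult_right_mono) auto
  also have "\<dots> = (1 + x\<^sup>2) powr (a - 1)"
    using powr_eq_mult_powr_diff_one[of "1 + x\<^sup>2" "a - 1"] by simp
  finally have "4 * a * (a - 1) * (x\<^sup>2 * (1 + x\<^sup>2) powr (a - 2)) \<le> 4 * a * (a - 1) * (1 + x\<^sup>2) powr (a - 1)"
    using a by (intro mult_left_mono) auto
  then show V2: "lyap'' a x \<le> (2 * a + 4 * a * (a - 1)) * (1 + x\<^sup>2) powr (a - 1)"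
    unfolding lyap''_def by (simp add: algebra_simps)
  have "1 * (1 + x\<^sup>2) powr (a - 1) \<le> (1 + x\<^sup>2) * (1 + x\<^sup>2) powr (a - 1)"
    using P by (intro mult_right_mono) auto
  then have "(1 + x\<^sup>2) powr (a - 1) \<le> lyap a x"
    using powr_eq_mult_powr_diff_one[of "1 + x\<^sup>2" a] by (simp add: lyap_def)
  then have "(2 * a + 4 * a * (a - 1)) * (1 + x\<^sup>2) powr (a - 1) \<le> (2 * a + 4 * a * (a - 1)) * lyap a x"
    using a by (intro mult_left_mono) auto
  with V2 show "lyap'' a x \<le> (2 * a + 4 * a * (a - 1)) * lyap a x" by linarith
qed

text \<open>\<open>B\<close> and \<open>s\<^sub>2\<close> stand for \<open>b(t,x)\<close> and \<open>\<sigma>(t,x)\<^sup>2\<close>, so this is \<open>L V \<le> K V\<close> for the generator.\<close>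
lemma lyap_generator_le:
  assumes a: "1 \<le> a" and c1: "0 \<le> c1" and r: "0 \<le> r" "r \<le> 2"
    and B: "\<bar>B\<bar> \<le> c1 * (1 + \<bar>x\<bar>)" and s: "0 \<le> s2" "s2 \<le> c1 * (1 + mpow \<bar>x\<bar> r)"
  shows "B * lyap' a x + s2 / 2 * lyap'' a x \<le> c1 * (2 * a + 4 * a\<^sup>2) * lyap a x"
proof -
  define w where "w = 1 + x\<^sup>2"
  define P where "P = w powr (a - 1)"
  have P: "0 \<le> P" by (simp add: P_def)
  have V: "lyap a x = w * P"
    unfolding P_def w_def lyap_def using powr_eq_mult_powr_diff_one[of "1 + x\<^sup>2" a] by simp
  have w1: "(1 + \<bar>x\<bar>) * \<bar>x\<bar> \<le> 2 * w"
    using abs_le_one_plus_square[of x] by (simp add: w_def algebra_simps power2_eq_square)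
  have "B * lyap' a x \<le> \<bar>B\<bar> * \<bar>lyap' a x\<bar>" by (simp add: abs_mult[symmetric])
  also have "\<bar>lyap' a x\<bar> = 2 * a * \<bar>x\<bar> * P" using a by (simp add: lyap'_def abs_mult P_def w_def)
  also have "\<bar>B\<bar> * (2 * a * \<bar>x\<bar> * P) \<le> c1 * (1 + \<bar>x\<bar>) * (2 * a * \<bar>x\<bar> * P)"
    using B a P by (intro mult_right_mono) auto
  also have "\<dots> = (2 * a * c1 * P) * ((1 + \<bar>x\<bar>) * \<bar>x\<bar>)" by (simp add: algebra_simps)
  also have "\<dots> \<le> (2 * a * c1 * P) * (2 * w)" using w1 a c1 P by (intro mult_left_mono) auto
  finally have b1: "B * lyap' a x \<le> 4 * a * c1 * (w * P)" by (simp add: algebra_simps)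
  have m: "1 + mpow \<bar>x\<bar> r \<le> 2 * w"
    using mpow_le_one_plus_square[OF r, of x] zero_le_power2[of x] unfolding w_def mult_2 by linarith
  have v2: "0 \<le> lyap'' a x" "lyap'' a x \<le> (2 * a + 4 * a * (a - 1)) * P"
    using lyap''_bounds[OF a, of x] by (simp_all add: P_def w_def)
  have "s2 / 2 * lyap'' a x \<le> (c1 * (1 + mpow \<bar>x\<bar> r)) / 2 * ((2 * a + 4 * a * (a - 1)) * P)"
    using s v2 by (intro mult_mono divide_right_mono) auto
  also have "\<dots> \<le> (c1 * (2 * w)) / 2 * ((2 * a + 4 * a * (a - 1)) * P)"
    using m c1 a P by (intro mult_right_mono divide_right_mono mult_left_mono mult_nonneg_nonneg) auto
  finally have b2: "s2 / 2 * lyap'' a x \<le> c1 * (2 * a + 4 * a * (a - 1)) * (w * P)"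
    by (simp add: algebra_simps)
  have "B * lyap' a x + s2 / 2 * lyap'' a x \<le> (4 * a * c1 + c1 * (2 * a + 4 * a * (a - 1))) * (w * P)"
    using b1 b2 by (simp add: algebra_simps)
  also have "4 * a * c1 + c1 * (2 * a + 4 * a * (a - 1)) = c1 * (2 * a + 4 * a\<^sup>2)"
    by (simp add: algebra_simps power2_eq_square)
  finally show ?thesis using V by simp
qed

lemma trunc_lyap_bounds:
  assumes a: "1 \<le> a" and e: "0 < e"
  shows "0 \<le> trunc_lyap a e x" "trunc_lyap a e x \<le> lyap a x" "trunc_lyap a e x \<le> 1 / e"
proof -
  have V: "1 \<le> lyap a x" using lyap_ge_one[of a x] a by simp
  have D: "1 \<le> 1 + e * lyap a x" using V e by simp
  show "0 \<le> trunc_lyap a e x" "trunc_lyap a e x \<le> lyap a x"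
    unfolding trunc_lyap_def using V D by (auto simp: divide_le_eq)
  have "e * lyap a x / (1 + e * lyap a x) \<le> 1" using D by simp
  then show "trunc_lyap a e x \<le> 1 / e" unfolding trunc_lyap_def using e D by (simp add: field_simps)
qed

lemma abs_trunc_lyap'_le:
  assumes a: "1 \<le> a" and e: "0 < e"
  shows "\<bar>trunc_lyap' a e x\<bar> \<le> 2 * a / e"
proof -
  define D where "D = 1 + e * lyap a x"
  have D: "1 \<le> D" using trunc_denominator_ge_one[of e a x] a e by (simp add: D_def)
  have "\<bar>lyap' a x / D\<^sup>2\<bar> = \<bar>lyap' a x\<bar> / D\<^sup>2" by simp
  also have "\<dots> \<le> 2 * a * lyap a x / D\<^sup>2"
    using abs_lyap'_le[of a x] a D by (intro divide_right_mono) auto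
  also have "\<dots> \<le> 2 * a * lyap a x / D"
    using a D lyap_ge_one[of a x] by (intro divide_left_mono) (auto simp: power2_eq_square)
  also have "\<dots> = 2 * a * trunc_lyap a e x" by (simp add: trunc_lyap_def D_def)
  also have "\<dots> \<le> 2 * a * (1 / e)" using trunc_lyap_bounds(3)[OF a e] a by (intro mult_left_mono) auto
  finally show ?thesis by (simp add: trunc_lyap'_def D_def)
qed

lemma abs_trunc_lyap''_le:
  assumes a: "1 \<le> a" and e: "0 < e"
  shows "\<bar>trunc_lyap'' a e x\<bar> \<le> (2 * a + 4 * a * (a - 1)) / e + 8 * a\<^sup>2 / e"
proof -
  define V D c where "V = lyap a x" and "D = 1 + e * lyap a x" and "c = 2 * a + 4 * a * (a - 1)"
  have V: "1 \<le> V" using lyap_ge_one[of a x] a by (simp add: V_def)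
  have D: "1 \<le> D" using V e by (simp add: D_def V_def)
  have VD: "V / D \<le> 1 / e" "e * V \<le> D"
    using trunc_lyap_bounds(3)[OF a e, of x] by (auto simp: D_def V_def trunc_lyap_def)
  have "0 \<le> c" using a by (simp add: c_def)
  have t1: "\<bar>lyap'' a x / D\<^sup>2\<bar> \<le> c / e"
  proof -
    have "\<bar>lyap'' a x / D\<^sup>2\<bar> = lyap'' a x / D\<^sup>2" using lyap''_bounds(1)[OF a] by simp
    also have "\<dots> \<le> c * V / D\<^sup>2"
      using lyap''_bounds(3)[OF a, of x] D by (intro divide_right_mono) (auto simp: c_def V_def)
    also have "\<dots> \<le> c * V / D"
      using \<open>0 \<le> c\<close> V D by (intro divide_left_mono) (auto simp: power2_eq_square)
    also have "\<dots> = c * (V / D)" by simp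
    also have "\<dots> \<le> c * (1 / e)" using VD(1) \<open>0 \<le> c\<close> by (rule mult_left_mono)
    finally show ?thesis by simp
  qed
  have t2: "\<bar>2 * e * (lyap' a x)\<^sup>2 / D ^ 3\<bar> \<le> 8 * a\<^sup>2 / e"
  proof -
    have "(lyap' a x)\<^sup>2 \<le> (2 * a * V)\<^sup>2"
      using abs_lyap'_le[of a x] a V by (simp add: abs_le_square_iff[symmetric] V_def)
    then have "\<bar>2 * e * (lyap' a x)\<^sup>2 / D ^ 3\<bar> \<le> 2 * e * (2 * a * V)\<^sup>2 / D ^ 3"
      using e D by (simp add: divide_right_mono)
    also have "\<dots> = 8 * a\<^sup>2 * ((e * V) / D) * (V / D) * (1 / D)"
      by (simp add: power2_eq_square power3_eq_cube)
    also have "\<dots> \<le> 8 * a\<^sup>2 * 1 * (1 / e) * 1"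
      using VD D V e by (intro mult_mono) auto
    finally show ?thesis by simp
  qed
  have "\<bar>trunc_lyap'' a e x\<bar> \<le> \<bar>lyap'' a x / D\<^sup>2\<bar> + \<bar>2 * e * (lyap' a x)\<^sup>2 / D ^ 3\<bar>"
    unfolding trunc_lyap''_def D_def by (rule abs_triangle_ineq4)
  with t1 t2 show ?thesis by (simp add: c_def)
qed

text \<open>The truncation preserves the Lyapunov inequality, because \<open>v \<mapsto> v / (1 + \<epsilon> v)\<close> is increasing
  and concave.\<close>
lemma trunc_lyap_generator_le:
  assumes a: "1 \<le> a" and e: "0 \<le> e" and c1: "0 \<le> c1" and r: "0 \<le> r" "r \<le> 2"
    and B: "\<bar>B\<bar> \<le> c1 * (1 + \<bar>x\<bar>)" and s: "0 \<le> s2" "s2 \<le> c1 * (1 + mpow \<bar>x\<bar> r)"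
  shows "B * trunc_lyap' a e x + s2 / 2 * trunc_lyap'' a e x \<le> c1 * (2 * a + 4 * a\<^sup>2) * trunc_lyap a e x"
proof -
  define K D where "K = c1 * (2 * a + 4 * a\<^sup>2)" and "D = 1 + e * lyap a x"
  have D: "1 \<le> D" using trunc_denominator_ge_one[of e a x] a e by (simp add: D_def)
  have "0 \<le> K" using a c1 by (simp add: K_def)
  have "B * trunc_lyap' a e x + s2 / 2 * trunc_lyap'' a e x
      = (B * lyap' a x + s2 / 2 * lyap'' a x) / D\<^sup>2 - s2 * e * (lyap' a x)\<^sup>2 / D ^ 3"
    using D by (simp add: trunc_lyap'_def trunc_lyap''_def D_def[symmetric] field_simps)
  also have "\<dots> \<le> (B * lyap' a x + s2 / 2 * lyap'' a x) / D\<^sup>2"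
    using s e D by simp
  also have "\<dots> \<le> K * lyap a x / D\<^sup>2"
    using lyap_generator_le[OF a c1 r B s] D by (intro divide_right_mono) (auto simp: K_def)
  also have "\<dots> \<le> K * lyap a x / D"
    using \<open>0 \<le> K\<close> D lyap_ge_one[of a x] a by (intro divide_left_mono) (auto simp: power2_eq_square)
  finally show ?thesis by (simp add: trunc_lyap_def K_def D_def)
qed

lemma trunc_lyap_incseq_tendsto:
  assumes a: "1 \<le> a"
  shows "incseq (\<lambda>n. trunc_lyap a (1 / Suc n) x)" "(\<lambda>n. trunc_lyap a (1 / Suc n) x) \<longlonglongrightarrow> lyap a x"
proof -
  have V: "1 \<le> lyap a x" using lyap_ge_one[of a x] a by simp
  show "incseq (\<lambda>n. trunc_lyap a (1 / Suc n) x)"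
  proof (rule incseq_SucI)
    fix n
    have "1 / real (Suc (Suc n)) \<le> 1 / real (Suc n)" by (intro divide_left_mono) auto
    then have "1 + (1 / real (Suc (Suc n))) * lyap a x \<le> 1 + (1 / real (Suc n)) * lyap a x"
      using V by (intro add_left_mono mult_right_mono) auto
    moreover have "0 < 1 + (1 / real (Suc (Suc n))) * lyap a x" using V by (intro add_pos_nonneg) auto
    ultimately show "trunc_lyap a (1 / Suc n) x \<le> trunc_lyap a (1 / Suc (Suc n)) x"
      unfolding trunc_lyap_def using V by (intro divide_left_mono) (auto intro: mult_pos_pos)
  qed
  have "(\<lambda>n. trunc_lyap a (1 / Suc n) x) \<longlonglongrightarrow> lyap a x / (1 + 0 * lyap a x)"
    unfolding trunc_lyap_def
    by (intro tendsto_intros LIMSEQ_inverse_real_of_nat[unfolded inverse_eq_divide]) auto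
  then show "(\<lambda>n. trunc_lyap a (1 / Suc n) x) \<longlonglongrightarrow> lyap a x" by simp
qed

lemma abs_powr_eq_square_powr: "\<bar>x::real\<bar> powr q = (x\<^sup>2) powr (q / 2)"
proof (cases "x = 0")
  case False
  then have "\<bar>x\<bar> powr 2 = x\<^sup>2" by simp
  then have "(x\<^sup>2) powr (q / 2) = \<bar>x\<bar> powr (2 * (q / 2))" by (metis powr_powr)
  then show ?thesis by simp
qed simp

lemma powr_le_lyap: "0 \<le> q \<Longrightarrow> \<bar>x\<bar> powr q \<le> lyap (q / 2) x"
  unfolding abs_powr_eq_square_powr lyap_def by (intro powr_mono2) auto

lemma lyap_le_powr:
  assumes q: "0 \<le> q"
  shows "lyap (q / 2) x \<le> 2 powr (q / 2) * (1 + \<bar>x\<bar> powr q)"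
proof (cases "x\<^sup>2 \<le> 1")
  case True
  have "(1 + x\<^sup>2) powr (q / 2) \<le> 2 powr (q / 2)" using q True by (intro powr_mono2) auto
  also have "\<dots> \<le> 2 powr (q / 2) * (1 + \<bar>x\<bar> powr q)" by simp
  finally show ?thesis by (simp add: lyap_def)
next
  case False
  have "(1 + x\<^sup>2) powr (q / 2) \<le> (2 * x\<^sup>2) powr (q / 2)" using q False by (intro powr_mono2) auto
  also have "\<dots> = 2 powr (q / 2) * \<bar>x\<bar> powr q" by (simp add: powr_mult abs_powr_eq_square_powr)
  also have "\<dots> \<le> 2 powr (q / 2) * (1 + \<bar>x\<bar> powr q)" by simp
  finally show ?thesis by (simp add: lyap_def)
qed

section \<open>A uniform moment bound on \<open>\<R>\<close>\<close>

lemma continuous_on_compose_snd: "continuous_on UNIV g \<Longrightarrow> continuous_on A (\<lambda>z. g (snd z))"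
  by (rule continuous_on_compose2[of UNIV g A snd]) (auto intro: continuous_on_snd)

lemma bounded_exp_times_image:
  fixes \<beta> T :: real and h :: "real \<Rightarrow> real"
  assumes "0 \<le> \<beta>" "\<And>x. \<bar>h x\<bar> \<le> B"
  shows "bounded ((\<lambda>z. exp (- \<beta> * fst z) * h (snd z)) ` ({0..T} \<times> S))"
  unfolding bounded_iff
proof (intro exI ballI)
  fix y assume "y \<in> (\<lambda>z. exp (- \<beta> * fst z) * h (snd z)) ` ({0..T} \<times> S)"
  then obtain t x where t: "t \<in> {0..T}" and y: "y = exp (- \<beta> * t) * h x" by auto
  have "0 \<le> \<beta> * t" using t assms(1) by simp
  then have "exp (- \<beta> * t) \<le> 1" by simp
  then have "exp (- \<beta> * t) * \<bar>h x\<bar> \<le> 1 * B" using assms(2)[of x] by (intro mult_mono) auto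
  then show "norm y \<le> B" by (simp add: y abs_mult)
qed

lemma C12b_exp_times:
  fixes g g' g'' :: "real \<Rightarrow> real" and \<beta> :: real
  assumes g: "\<And>x. (g has_real_derivative g' x) (at x)" and g': "\<And>x. (g' has_real_derivative g'' x) (at x)"
    and g'': "continuous_on UNIV g''" and \<beta>: "0 \<le> \<beta>"
    and bounds: "\<And>x. \<bar>g x\<bar> \<le> B0" "\<And>x. \<bar>g' x\<bar> \<le> B1" "\<And>x. \<bar>g'' x\<bar> \<le> B2"
  shows "C12b T S (\<lambda>z. exp (- \<beta> * fst z) * g (snd z)) (\<lambda>z. exp (- \<beta> * fst z) * (- \<beta> * g (snd z)))
    (\<lambda>z. exp (- \<beta> * fst z) * g' (snd z)) (\<lambda>z. exp (- \<beta> * fst z) * g'' (snd z))"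
  unfolding C12b_def
proof (intro conjI ballI)
  fix t x
  have "((\<lambda>s. exp (- \<beta> * s) * g x) has_real_derivative exp (- \<beta> * t) * (- \<beta> * 1) * g x) (at t within {0..T})"
    by (rule has_field_derivative_at_within) (auto intro!: derivative_eq_intros)
  then show "((\<lambda>s. exp (- \<beta> * fst (s, x)) * g (snd (s, x))) has_real_derivative
      exp (- \<beta> * fst (t, x)) * (- \<beta> * g (snd (t, x)))) (at t within {0..T})"
    by (simp add: mult.assoc)
  show "((\<lambda>y. exp (- \<beta> * fst (t, y)) * g (snd (t, y))) has_real_derivative
      exp (- \<beta> * fst (t, x)) * g' (snd (t, x))) (at x within S)"
    using g[of x] by (simp add: DERIV_cmult has_field_derivative_at_within)
  show "((\<lambda>y. exp (- \<beta> * fst (t, y)) * g' (snd (t, y))) has_real_derivative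
      exp (- \<beta> * fst (t, x)) * g'' (snd (t, x))) (at x within S)"
    using g'[of x] by (simp add: DERIV_cmult has_field_derivative_at_within)
next
  have cont: "continuous_on UNIV g" "continuous_on UNIV g'"
    using g g' by (auto intro!: continuous_at_imp_continuous_on DERIV_isCont)
  show "continuous_on ({0..T} \<times> S) (\<lambda>z. exp (- \<beta> * fst z) * g (snd z))"
    by (intro continuous_intros continuous_on_compose_snd[OF cont(1)])
  show "continuous_on ({0..T} \<times> S) (\<lambda>z. exp (- \<beta> * fst z) * (- \<beta> * g (snd z)))"
    by (intro continuous_intros continuous_on_compose_snd[OF cont(1)])
  show "continuous_on ({0..T} \<times> S) (\<lambda>z. exp (- \<beta> * fst z) * g' (snd z))"
    by (intro continuous_intros continuous_on_compose_snd[OF cont(2)])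
  show "continuous_on ({0..T} \<times> S) (\<lambda>z. exp (- \<beta> * fst z) * g'' (snd z))"
    by (intro continuous_intros continuous_on_compose_snd[OF g''])
next
  show "bounded ((\<lambda>z. exp (- \<beta> * fst z) * g (snd z)) ` ({0..T} \<times> S))"
    using bounds(1) by (rule bounded_exp_times_image[OF \<beta>])
  show "bounded ((\<lambda>z. exp (- \<beta> * fst z) * g' (snd z)) ` ({0..T} \<times> S))"
    using bounds(2) by (rule bounded_exp_times_image[OF \<beta>])
  show "bounded ((\<lambda>z. exp (- \<beta> * fst z) * g'' (snd z)) ` ({0..T} \<times> S))"
    using bounds(3) by (rule bounded_exp_times_image[OF \<beta>])
  show "bounded ((\<lambda>z. exp (- \<beta> * fst z) * (- \<beta> * g (snd z))) ` ({0..T} \<times> S))"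
  proof (rule bounded_exp_times_image[OF \<beta>])
    fix x
    have "\<beta> * \<bar>g x\<bar> \<le> \<beta> * B0" using bounds(1) \<beta> by (rule mult_left_mono)
    then show "\<bar>- \<beta> * g x\<bar> \<le> \<beta> * B0" using \<beta> by (simp add: abs_mult)
  qed
qed

lemma C12b_exp_trunc_lyap:
  assumes a: "1 \<le> a" and e: "0 < e" and \<beta>: "0 \<le> \<beta>"
  shows "C12b T S (\<lambda>z. exp (- \<beta> * fst z) * trunc_lyap a e (snd z))
                  (\<lambda>z. exp (- \<beta> * fst z) * (- \<beta> * trunc_lyap a e (snd z)))
                  (\<lambda>z. exp (- \<beta> * fst z) * trunc_lyap' a e (snd z))
                  (\<lambda>z. exp (- \<beta> * fst z) * trunc_lyap'' a e (snd z))"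
proof (rule C12b_exp_times[OF trunc_lyap_has_derivative trunc_lyap'_has_derivative
      continuous_on_trunc_lyap'' \<beta>])
  show "\<bar>trunc_lyap a e x\<bar> \<le> 1 / e" for x using trunc_lyap_bounds[OF a e, of x] by simp
qed (use a e abs_trunc_lyap'_le abs_trunc_lyap''_le in auto)

lemma powr_le_one_plus_powr:
  assumes "0 \<le> s" "s \<le> p"
  shows "\<bar>x::real\<bar> powr s \<le> 1 + \<bar>x\<bar> powr p"
proof (cases "\<bar>x\<bar> \<le> 1")
  case True
  then have "\<bar>x\<bar> powr s \<le> 1" using assms powr_mono2[of s "\<bar>x\<bar>" 1] by simp
  then show ?thesis by (simp add: add_increasing2)
next
  case False
  then have "\<bar>x\<bar> powr s \<le> \<bar>x\<bar> powr p" using assms by (intro powr_mono) auto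
  then show ?thesis by simp
qed

lemma abs_generator_le:
  fixes x :: real
  assumes u: "\<bar>u0\<bar> \<le> A0" "\<bar>u1\<bar> \<le> A1" "\<bar>u2\<bar> \<le> A2"
    and B: "\<bar>B\<bar> \<le> c1 * (1 + \<bar>x\<bar>)" and s: "0 \<le> s2" "s2 \<le> c1 * (1 + mpow \<bar>x\<bar> r)"
    and p: "1 \<le> p" "0 \<le> r" "r \<le> p" and c1: "0 \<le> c1"
  shows "\<bar>u0 + B * u1 + s2 / 2 * u2\<bar> \<le> (A0 + 2 * c1 * A1 + c1 * A2) * (1 + \<bar>x\<bar> powr p)"
proof -
  define P where "P = 1 + \<bar>x\<bar> powr p"
  have "1 \<le> P" by (simp add: P_def)
  have A: "0 \<le> A0" "0 \<le> A1" "0 \<le> A2" using u by (meson abs_ge_zero order_trans)+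
  have "\<bar>x\<bar> \<le> 1 + \<bar>x\<bar> powr p"
    using powr_le_one_plus_powr[of 1 p x] p by (cases "x = 0") auto
  then have P1: "1 + \<bar>x\<bar> \<le> 2 * P"
    unfolding P_def mult_2 using powr_ge_zero[of "\<bar>x\<bar>" p] by linarith
  have "mpow \<bar>x\<bar> r \<le> 1 + \<bar>x\<bar> powr p"
    using powr_le_one_plus_powr[of r p x] p by (auto simp: mpow_def)
  then have P2: "1 + mpow \<bar>x\<bar> r \<le> 2 * P"
    unfolding P_def mult_2 using powr_ge_zero[of "\<bar>x\<bar>" p] by linarith
  have "\<bar>u0\<bar> \<le> A0 * P"
    using u(1) A \<open>1 \<le> P\<close> mult_left_mono[of 1 P A0] by simp
  moreover have "\<bar>B * u1\<bar> \<le> (c1 * (2 * P)) * A1"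
    unfolding abs_mult using B P1 u(2) c1 A
    by (intro mult_mono order_trans[OF B]) (auto intro: mult_left_mono)
  moreover have "\<bar>s2 / 2 * u2\<bar> \<le> (c1 * (2 * P)) / 2 * A2"
  proof -
    have "s2 \<le> c1 * (2 * P)" using s mult_left_mono[OF P2 c1] by linarith
    then show ?thesis
      unfolding abs_mult using u(3) s(1) c1 \<open>1 \<le> P\<close> by (intro mult_mono divide_right_mono) auto
  qed
  ultimately have "\<bar>u0 + B * u1 + s2 / 2 * u2\<bar> \<le> (A0 + 2 * c1 * A1 + c1 * A2) * P"
    by (simp add: algebra_simps)
  then show ?thesis by (simp add: P_def)
qed

text \<open>The generator maps \<open>C\<^sup>1\<^sup>,\<^sup>2\<^sub>b\<close> into functions of \<open>p\<close>-growth; this is where \<open>p \<ge> max 1 r\<close> enters.\<close>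
lemma p_growth_generator:
  fixes b \<sigma> :: "real \<Rightarrow> real \<Rightarrow> real"
  assumes u: "C12b T S u ut ux uxx"
    and b_meas: "(\<lambda>z. b (fst z) (snd z)) \<in> borel_measurable (restrict_space borel ({0..T} \<times> UNIV))"
    and \<sigma>_meas: "(\<lambda>z. \<sigma> (fst z) (snd z)) \<in> borel_measurable (restrict_space borel ({0..T} \<times> UNIV))"
    and b_growth: "\<forall>t\<in>{0..T}. \<forall>x. \<bar>b t x\<bar> \<le> c1 * (1 + \<bar>x\<bar>)"
    and \<sigma>_growth: "\<forall>t\<in>{0..T}. \<forall>x. (\<sigma> t x)\<^sup>2 \<le> c1 * (1 + mpow \<bar>x\<bar> r)"
    and p: "1 \<le> p" "0 \<le> r" "r \<le> p"
  shows "p_growth p T S (\<lambda>z. ut z + b (fst z) (snd z) * ux z + (\<sigma> (fst z) (snd z))\<^sup>2 / 2 * uxx z)"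
proof -
  obtain A0 A1 A2 where A: "\<And>z. z \<in> {0..T} \<times> S \<Longrightarrow> \<bar>ut z\<bar> \<le> A0"
    "\<And>z. z \<in> {0..T} \<times> S \<Longrightarrow> \<bar>ux z\<bar> \<le> A1" "\<And>z. z \<in> {0..T} \<times> S \<Longrightarrow> \<bar>uxx z\<bar> \<le> A2"
    using u unfolding C12b_def bounded_iff by (metis image_eqI real_norm_def)
  show ?thesis
  proof (rule p_growthI[where C = "A0 + 2 * c1 * A1 + c1 * A2"])
    have [measurable]: "ut \<in> borel_measurable (restrict_space borel ({0..T} \<times> S))"
      "ux \<in> borel_measurable (restrict_space borel ({0..T} \<times> S))"
      "uxx \<in> borel_measurable (restrict_space borel ({0..T} \<times> S))"
      using u by (auto simp: C12b_def intro: borel_measurable_continuous_on_restrict)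
    have [measurable]: "(\<lambda>z. b (fst z) (snd z)) \<in> borel_measurable (restrict_space borel ({0..T} \<times> S))"
      "(\<lambda>z. \<sigma> (fst z) (snd z)) \<in> borel_measurable (restrict_space borel ({0..T} \<times> S))"
      by (rule measurable_restrict_mono[OF b_meas] measurable_restrict_mono[OF \<sigma>_meas]; auto)+
    show "(\<lambda>z. ut z + b (fst z) (snd z) * ux z + (\<sigma> (fst z) (snd z))\<^sup>2 / 2 * uxx z)
        \<in> borel_measurable (restrict_space borel ({0..T} \<times> S))"
      by measurable
  next
    fix t x assume t: "t \<in> {0..T}" and x: "x \<in> S"
    have "\<bar>b t 0\<bar> \<le> c1 * (1 + \<bar>0\<bar>)" using b_growth t by blast
    then have c1: "0 \<le> c1" using abs_ge_zero[of "b t 0"] by simp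
    have b: "\<bar>b t x\<bar> \<le> c1 * (1 + \<bar>x\<bar>)" and \<sigma>: "(\<sigma> t x)\<^sup>2 \<le> c1 * (1 + mpow \<bar>x\<bar> r)"
      using b_growth \<sigma>_growth t by auto
    have "(t, x) \<in> {0..T} \<times> S" using t x by simp
    from abs_generator_le[OF A(1)[OF this] A(2)[OF this] A(3)[OF this] b zero_le_power2 \<sigma> p c1]
    show "\<bar>ut (t, x) + b (fst (t, x)) (snd (t, x)) * ux (t, x)
        + (\<sigma> (fst (t, x)) (snd (t, x)))\<^sup>2 / 2 * uxx (t, x)\<bar> \<le> (A0 + 2 * c1 * A1 + c1 * A2) * (1 + \<bar>x\<bar> powr p)"
      by simp
  qed
qed

lemma exp_trunc_lyap_generator_le:
  assumes a: "1 \<le> a" and e: "0 < e" and c1: "0 \<le> c1" and r: "0 \<le> r" "r \<le> 2"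
    and B: "\<bar>B\<bar> \<le> c1 * (1 + \<bar>x\<bar>)" and s: "0 \<le> s2" "s2 \<le> c1 * (1 + mpow \<bar>x\<bar> r)"
    and t: "t \<le> T" and \<beta>: "\<beta> = c1 * (2 * a + 4 * a\<^sup>2) + 1"
  shows "exp (- \<beta> * t) * (- \<beta> * trunc_lyap a e x) + B * (exp (- \<beta> * t) * trunc_lyap' a e x)
      + s2 / 2 * (exp (- \<beta> * t) * trunc_lyap'' a e x) \<le> - exp (- \<beta> * T) * trunc_lyap a e x"
proof -
  have "0 \<le> \<beta>" using a c1 by (simp add: \<beta>)
  have g: "0 \<le> trunc_lyap a e x" using trunc_lyap_bounds(1)[OF a e] .
  have "exp (- \<beta> * t) * (- \<beta> * trunc_lyap a e x) + B * (exp (- \<beta> * t) * trunc_lyap' a e x)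
      + s2 / 2 * (exp (- \<beta> * t) * trunc_lyap'' a e x)
      = exp (- \<beta> * t) * ((B * trunc_lyap' a e x + s2 / 2 * trunc_lyap'' a e x) - \<beta> * trunc_lyap a e x)"
    by (simp add: algebra_simps)
  also have "\<dots> \<le> exp (- \<beta> * t) * (c1 * (2 * a + 4 * a\<^sup>2) * trunc_lyap a e x - \<beta> * trunc_lyap a e x)"
    using trunc_lyap_generator_le[OF a _ c1 r B s] e by (intro mult_left_mono) auto
  also have "\<dots> = - (exp (- \<beta> * t) * trunc_lyap a e x)" by (simp add: \<beta> algebra_simps)
  also have "\<dots> \<le> - (exp (- \<beta> * T) * trunc_lyap a e x)"
    using t \<open>0 \<le> \<beta>\<close> g by (auto intro!: mult_right_mono mult_left_mono)
  finally show ?thesis by simp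
qed

lemma p_growth_trunc_lyap:
  assumes "1 \<le> a" "0 < e"
  shows "p_growth p T S (\<lambda>z. trunc_lyap a e (snd z))"
proof (rule p_growth_boundedI)
  show "(\<lambda>z. trunc_lyap a e (snd z)) \<in> borel_measurable (restrict_space borel ({0..T} \<times> S))"
    using continuous_on_trunc_lyap[of e a] assms
    by (intro borel_measurable_continuous_on_restrict continuous_on_compose_snd) auto
  show "\<bar>trunc_lyap a e (snd (t, x))\<bar> \<le> 1 / e" for t x
    using trunc_lyap_bounds[OF assms, of x] by simp
qed

lemma set_integral_trunc_lyap_le:
  assumes m0: "prob_space m0" "sets m0 = sets borel" "integrable m0 (\<lambda>x. \<bar>x\<bar> powr q)"
    and q: "2 \<le> q" and e: "0 < e"
  shows "(LINT x:A|m0. trunc_lyap (q / 2) e x) \<le> 2 powr (q / 2) * (1 + (LINT x|m0. \<bar>x\<bar> powr q))"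
proof -
  interpret prob_space m0 by (rule m0(1))
  have [measurable_cong]: "sets m0 = sets borel" by (rule m0(2))
  have E: "0 \<le> (LINT x|m0. \<bar>x\<bar> powr q)" by (rule integral_nonneg_AE) auto
  have "ennreal \<bar>LINT x:A|m0. trunc_lyap (q / 2) e x\<bar>
      \<le> (\<integral>\<^sup>+x. ennreal (indicator A x * \<bar>trunc_lyap (q / 2) e x\<bar>) \<partial>m0)"
    by (rule ennreal_abs_set_integral_le)
  also have "\<dots> \<le> (\<integral>\<^sup>+x. ennreal (2 powr (q / 2)) * (1 + ennreal (\<bar>x\<bar> powr q)) \<partial>m0)"
  proof (rule nn_integral_mono)
    fix x
    have "indicator A x * \<bar>trunc_lyap (q / 2) e x\<bar> \<le> lyap (q / 2) x"
      using trunc_lyap_bounds[of "q / 2" e x] q e lyap_ge_one[of "q / 2" x]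
      by (auto simp: indicator_def)
    also have "\<dots> \<le> 2 powr (q / 2) * (1 + \<bar>x\<bar> powr q)" using lyap_le_powr q by simp
    finally have "ennreal (indicator A x * \<bar>trunc_lyap (q / 2) e x\<bar>)
        \<le> ennreal (2 powr (q / 2) * (1 + \<bar>x\<bar> powr q))"
      by (rule ennreal_leI)
    then show "ennreal (indicator A x * \<bar>trunc_lyap (q / 2) e x\<bar>)
        \<le> ennreal (2 powr (q / 2)) * (1 + ennreal (\<bar>x\<bar> powr q))"
      by (simp add: ennreal_mult)
  qed
  also have "\<dots> = ennreal (2 powr (q / 2)) * (1 + (\<integral>\<^sup>+x. ennreal (\<bar>x\<bar> powr q) \<partial>m0))"
    by (simp add: nn_integral_cmult nn_integral_add emeasure_space_1)
  also have "(\<integral>\<^sup>+x. ennreal (\<bar>x\<bar> powr q) \<partial>m0) = ennreal (LINT x|m0. \<bar>x\<bar> powr q)"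
    by (rule nn_integral_eq_integral[OF m0(3)]) auto
  also have "ennreal (2 powr (q / 2)) * (1 + ennreal (LINT x|m0. \<bar>x\<bar> powr q))
      = ennreal (2 powr (q / 2) * (1 + (LINT x|m0. \<bar>x\<bar> powr q)))"
    using E by (simp add: ennreal_mult)
  finally have "\<bar>LINT x:A|m0. trunc_lyap (q / 2) e x\<bar> \<le> 2 powr (q / 2) * (1 + (LINT x|m0. \<bar>x\<bar> powr q))"
    using E by simp
  then show ?thesis by simp
qed

lemma flow_integral_exp_trunc_lyap_generator_le:
  fixes b \<sigma> :: "real \<Rightarrow> real \<Rightarrow> real"
  assumes a: "1 \<le> a" and e: "0 < e" and c1: "0 \<le> c1" and r: "0 \<le> r" "r \<le> 2" and p: "p \<ge> max 1 r"
    and b_meas: "(\<lambda>z. b (fst z) (snd z)) \<in> borel_measurable (restrict_space borel ({0..T} \<times> UNIV))"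
    and \<sigma>_meas: "(\<lambda>z. \<sigma> (fst z) (snd z)) \<in> borel_measurable (restrict_space borel ({0..T} \<times> UNIV))"
    and b_growth: "\<forall>t\<in>{0..T}. \<forall>x. \<bar>b t x\<bar> \<le> c1 * (1 + \<bar>x\<bar>)"
    and \<sigma>_growth: "\<forall>t\<in>{0..T}. \<forall>x. (\<sigma> t x)\<^sup>2 \<le> c1 * (1 + mpow \<bar>x\<bar> r)"
    and Vp: "Vp p T S m" and S: "closed S" and \<beta>: "\<beta> = c1 * (2 * a + 4 * a\<^sup>2) + 1"
  shows "flow_integral T S m (\<lambda>z. exp (- \<beta> * fst z) * (- \<beta> * trunc_lyap a e (snd z))
      + b (fst z) (snd z) * (exp (- \<beta> * fst z) * trunc_lyap' a e (snd z))
      + (\<sigma> (fst z) (snd z))\<^sup>2 / 2 * (exp (- \<beta> * fst z) * trunc_lyap'' a e (snd z)))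
    \<le> - exp (- \<beta> * T) * flow_integral T S m (\<lambda>z. trunc_lyap a e (snd z))"
  unfolding flow_integral_cmult[symmetric]
proof (rule flow_integral_mono[OF Vp S])
  have "0 \<le> \<beta>" using a c1 by (simp add: \<beta>)
  show "p_growth p T S (\<lambda>z. exp (- \<beta> * fst z) * (- \<beta> * trunc_lyap a e (snd z))
      + b (fst z) (snd z) * (exp (- \<beta> * fst z) * trunc_lyap' a e (snd z))
      + (\<sigma> (fst z) (snd z))\<^sup>2 / 2 * (exp (- \<beta> * fst z) * trunc_lyap'' a e (snd z)))"
    using p r by (intro p_growth_generator[OF C12b_exp_trunc_lyap[OF a e \<open>0 \<le> \<beta>\<close>] b_meas \<sigma>_meas
        b_growth \<sigma>_growth]) auto
  show "p_growth p T S (\<lambda>z. - exp (- \<beta> * T) * trunc_lyap a e (snd z))"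
    using p_growth_trunc_lyap[OF a e] by (rule p_growth_cmult)
next
  fix t x assume t: "t \<in> {0..T}"
  have "\<bar>b t x\<bar> \<le> c1 * (1 + \<bar>x\<bar>)" "(\<sigma> t x)\<^sup>2 \<le> c1 * (1 + mpow \<bar>x\<bar> r)"
    using t b_growth \<sigma>_growth by auto
  from exp_trunc_lyap_generator_le[OF a e c1 r this(1) zero_le_power2 this(2) _ \<beta>] t
  show "exp (- \<beta> * fst (t, x)) * (- \<beta> * trunc_lyap a e (snd (t, x)))
      + b (fst (t, x)) (snd (t, x)) * (exp (- \<beta> * fst (t, x)) * trunc_lyap' a e (snd (t, x)))
      + (\<sigma> (fst (t, x)) (snd (t, x)))\<^sup>2 / 2 * (exp (- \<beta> * fst (t, x)) * trunc_lyap'' a e (snd (t, x)))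
    \<le> - exp (- \<beta> * T) * trunc_lyap a e (snd (t, x))"
    by simp
qed

lemma flow_integral_trunc_lyap_le:
  fixes b \<sigma> :: "real \<Rightarrow> real \<Rightarrow> real"
  assumes q: "2 \<le> q" and r: "0 \<le> r" "r \<le> 2" and p: "p \<ge> max 1 r" and c1: "0 \<le> c1"
    and m0: "prob_space m0" "sets m0 = sets borel" "integrable m0 (\<lambda>x. \<bar>x\<bar> powr q)"
    and b_meas: "(\<lambda>z. b (fst z) (snd z)) \<in> borel_measurable (restrict_space borel ({0..T} \<times> UNIV))"
    and \<sigma>_meas: "(\<lambda>z. \<sigma> (fst z) (snd z)) \<in> borel_measurable (restrict_space borel ({0..T} \<times> UNIV))"
    and b_growth: "\<forall>t\<in>{0..T}. \<forall>x. \<bar>b t x\<bar> \<le> c1 * (1 + \<bar>x\<bar>)"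
    and \<sigma>_growth: "\<forall>t\<in>{0..T}. \<forall>x. (\<sigma> t x)\<^sup>2 \<le> c1 * (1 + mpow \<bar>x\<bar> r)"
    and R: "inR p T Ob m0 b \<sigma> \<mu> m" and e: "0 < e"
  shows "flow_integral T (closure Ob) m (\<lambda>z. trunc_lyap (q / 2) e (snd z))
    \<le> exp ((c1 * (q + q\<^sup>2) + 1) * T) * (2 powr (q / 2) * (1 + (LINT x|m0. \<bar>x\<bar> powr q)))"
proof -
  define a S \<beta> A0 where "a = q / 2" and "S = closure Ob" and "\<beta> = c1 * (2 * a + 4 * a\<^sup>2) + 1"
    and "A0 = 2 powr (q / 2) * (1 + (LINT x|m0. \<bar>x\<bar> powr q))"
  define G where "G = flow_integral T S m (\<lambda>z. trunc_lyap a e (snd z))"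
  have a: "1 \<le> a" using q by (simp add: a_def)
  have "0 \<le> \<beta>" using a c1 by (simp add: \<beta>_def)
  have Vp: "Vp p T S m" using R by (simp add: inR_def S_def)
  let ?u = "\<lambda>z. exp (- \<beta> * fst z) * trunc_lyap a e (snd z)"
  from R[unfolded inR_def, THEN conjunct2, THEN conjunct2, rule_format,
      OF C12b_exp_trunc_lyap[OF a e \<open>0 \<le> \<beta>\<close>]]
  have "(LINT z:({0..T} \<times> S)|\<mu>. ?u z) = (LINT x:Ob|m0. trunc_lyap a e x)
      + flow_integral T S m (\<lambda>z. exp (- \<beta> * fst z) * (- \<beta> * trunc_lyap a e (snd z))
        + b (fst z) (snd z) * (exp (- \<beta> * fst z) * trunc_lyap' a e (snd z))
        + (\<sigma> (fst z) (snd z))\<^sup>2 / 2 * (exp (- \<beta> * fst z) * trunc_lyap'' a e (snd z)))"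
    by (simp add: S_def flow_integral_def)
  moreover have "0 \<le> (LINT z:({0..T} \<times> S)|\<mu>. ?u z)"
    unfolding set_lebesgue_integral_def
    using trunc_lyap_bounds(1)[OF a e] by (intro integral_nonneg_AE AE_I2) simp
  moreover have "(LINT x:Ob|m0. trunc_lyap a e x) \<le> A0"
    unfolding a_def A0_def by (rule set_integral_trunc_lyap_le[OF m0 q e])
  moreover note flow_integral_exp_trunc_lyap_generator_le[OF a e c1 r p b_meas \<sigma>_meas b_growth \<sigma>_growth
      Vp _ \<beta>_def]
  ultimately have "exp (- \<beta> * T) * G \<le> A0" by (simp add: S_def G_def)
  then have "exp (\<beta> * T) * (exp (- \<beta> * T) * G) \<le> exp (\<beta> * T) * A0" by (intro mult_left_mono) auto
  moreover have "exp (\<beta> * T) * (exp (- \<beta> * T) * G) = G"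
    by (simp add: mult.assoc[symmetric] exp_add[symmetric])
  ultimately have "G \<le> exp (\<beta> * T) * A0" by linarith
  moreover have "\<beta> = c1 * (q + q\<^sup>2) + 1" by (simp add: \<beta>_def a_def power2_eq_square algebra_simps)
  ultimately show ?thesis by (simp add: G_def S_def a_def A0_def)
qed

lemma inR_uniform_moment_bound:
  fixes b \<sigma> :: "real \<Rightarrow> real \<Rightarrow> real"
  assumes q: "2 \<le> q" and r: "0 \<le> r" "r \<le> 2" and p: "p \<ge> max 1 r" and c1: "0 \<le> c1"
    and m0: "prob_space m0" "sets m0 = sets borel" "integrable m0 (\<lambda>x. \<bar>x\<bar> powr q)"
    and b_meas: "(\<lambda>z. b (fst z) (snd z)) \<in> borel_measurable (restrict_space borel ({0..T} \<times> UNIV))"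
    and \<sigma>_meas: "(\<lambda>z. \<sigma> (fst z) (snd z)) \<in> borel_measurable (restrict_space borel ({0..T} \<times> UNIV))"
    and b_growth: "\<forall>t\<in>{0..T}. \<forall>x. \<bar>b t x\<bar> \<le> c1 * (1 + \<bar>x\<bar>)"
    and \<sigma>_growth: "\<forall>t\<in>{0..T}. \<forall>x. (\<sigma> t x)\<^sup>2 \<le> c1 * (1 + mpow \<bar>x\<bar> r)"
  obtains K where "0 \<le> K"
    and "\<And>\<mu> m. inR p T Ob m0 b \<sigma> \<mu> m \<Longrightarrow> flow_nn_integral T (closure Ob) m (\<lambda>x. \<bar>x\<bar> powr q) \<le> ennreal K"
proof -
  define K where "K = exp ((c1 * (q + q\<^sup>2) + 1) * T) * (2 powr (q / 2) * (1 + (LINT x|m0. \<bar>x\<bar> powr q)))"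
  have "0 \<le> (LINT x|m0. \<bar>x\<bar> powr q)" by (rule integral_nonneg_AE) simp
  then have "0 \<le> K" by (simp add: K_def)
  moreover have "flow_nn_integral T (closure Ob) m (\<lambda>x. \<bar>x\<bar> powr q) \<le> ennreal K"
    if R: "inR p T Ob m0 b \<sigma> \<mu> m" for \<mu> m
  proof -
    define g where "g n = trunc_lyap (q / 2) (1 / Suc n)" for n
    have Vp: "Vp p T (closure Ob) m" using R by (simp add: inR_def)
    have a: "1 \<le> q / 2" using q by simp
    have "flow_nn_integral T (closure Ob) m (\<lambda>x. \<bar>x\<bar> powr q) \<le> flow_nn_integral T (closure Ob) m (lyap (q / 2))"
      using q by (intro flow_nn_integral_mono powr_le_lyap) simp
    also have "\<dots> = (SUP n. flow_nn_integral T (closure Ob) m (g n))"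
      unfolding g_def using trunc_lyap_incseq_tendsto[OF a] continuous_on_trunc_lyap a
      by (intro flow_nn_integral_SUP[OF Vp] borel_measurable_continuous_onI) auto
    also have "\<dots> \<le> ennreal K"
    proof (rule SUP_least)
      fix n
      have "flow_nn_integral T (closure Ob) m (g n) = ennreal (flow_integral T (closure Ob) m (\<lambda>z. g n (snd z)))"
        unfolding g_def using trunc_lyap_bounds(1)[OF a]
        by (intro flow_nn_integral_eq_flow_integral[OF Vp] p_growth_trunc_lyap[OF a]) auto
      also have "\<dots> \<le> ennreal K"
        unfolding g_def K_def
        by (intro ennreal_leI flow_integral_trunc_lyap_le[OF q r p c1 m0 b_meas \<sigma>_meas b_growth \<sigma>_growth R]) simp
      finally show "flow_nn_integral T (closure Ob) m (g n) \<le> ennreal K" .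
    qed
    finally show ?thesis .
  qed
  ultimately show thesis by (rule that)
qed

section \<open>Convergence under a uniform moment bound\<close>

definition cutoff :: "real \<Rightarrow> real \<Rightarrow> real" where
  "cutoff M x = max 0 (min 1 (M + 1 - \<bar>x\<bar>))"

lemma cutoff_bounds: "0 \<le> cutoff M x" "cutoff M x \<le> 1"
  by (auto simp: cutoff_def)

lemma cutoff_eq_one: "\<bar>x\<bar> \<le> M \<Longrightarrow> cutoff M x = 1"
  by (auto simp: cutoff_def)

lemma cutoff_eq_zero: "M + 1 \<le> \<bar>x\<bar> \<Longrightarrow> cutoff M x = 0"
  by (auto simp: cutoff_def)

lemma continuous_on_cutoff: "continuous_on A (cutoff M)"
  unfolding cutoff_def[abs_def] by (intro continuous_intros)

lemma one_plus_powr_le_tail: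
  fixes x M p q :: real
  assumes M: "1 \<le> M" and p: "0 \<le> p" "p < q" and x: "M < \<bar>x\<bar>"
  shows "1 + \<bar>x\<bar> powr p \<le> 2 * M powr (- (q - p)) * \<bar>x\<bar> powr q"
proof -
  have "1 \<le> \<bar>x\<bar>" using M x by linarith
  then have "1 \<le> \<bar>x\<bar> powr p" using p by (simp add: ge_one_powr_ge_zero)
  moreover have "\<bar>x\<bar> powr p = \<bar>x\<bar> powr (- (q - p)) * \<bar>x\<bar> powr q"
    using powr_add[of "\<bar>x\<bar>" "- (q - p)" q] by simp
  moreover have "\<bar>x\<bar> powr (- (q - p)) \<le> M powr (- (q - p))"
    using p M x by (intro powr_mono2') auto
  ultimately show ?thesis
    using mult_right_mono[of "\<bar>x\<bar> powr (- (q - p))" "M powr (- (q - p))" "\<bar>x\<bar> powr q"] by simp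
qed

lemma abs_flow_integral_tail_le:
  fixes \<phi> :: "real \<times> real \<Rightarrow> real"
  assumes Vp: "Vp p T S m" and S: "closed S" and p: "0 \<le> p" "p < q" and M: "1 \<le> M"
    and growth: "\<forall>t\<in>{0..T}. \<forall>x\<in>S. \<bar>\<phi> (t, x)\<bar> \<le> C * (1 + \<bar>x\<bar> powr p)"
    and mom: "flow_nn_integral T S m (\<lambda>x. \<bar>x\<bar> powr q) \<le> ennreal K" and "0 \<le> K"
  shows "\<bar>flow_integral T S m (\<lambda>z. \<phi> z * (1 - cutoff M (snd z)))\<bar> \<le> 2 * \<bar>C\<bar> * M powr (- (q - p)) * K"
proof -
  define c where "c = 2 * \<bar>C\<bar> * M powr (- (q - p))"
  have "0 \<le> c" by (simp add: c_def)
  have tail: "\<bar>\<phi> (t, x) * (1 - cutoff M (snd (t, x)))\<bar> \<le> c * \<bar>x\<bar> powr q" if t: "t \<in> {0..T}" and x: "x \<in> S" for t x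
  proof (cases "\<bar>x\<bar> \<le> M")
    case True
    then show ?thesis using \<open>0 \<le> c\<close> by (simp add: cutoff_eq_one)
  next
    case False
    have "\<bar>\<phi> (t, x) * (1 - cutoff M x)\<bar> \<le> \<bar>\<phi> (t, x)\<bar> * 1"
      unfolding abs_mult using cutoff_bounds[of M x] by (intro mult_left_mono) auto
    also have "\<dots> \<le> \<bar>C\<bar> * (1 + \<bar>x\<bar> powr p)"
    proof -
      have "\<bar>\<phi> (t, x)\<bar> \<le> C * (1 + \<bar>x\<bar> powr p)" using growth t x by blast
      moreover have "C * (1 + \<bar>x\<bar> powr p) \<le> \<bar>C\<bar> * (1 + \<bar>x\<bar> powr p)" by (intro mult_right_mono) auto
      ultimately show ?thesis by simp
    qed
    also have "\<dots> \<le> \<bar>C\<bar> * (2 * M powr (- (q - p)) * \<bar>x\<bar> powr q)"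
      using one_plus_powr_le_tail[OF M p] False by (intro mult_left_mono) auto
    finally show ?thesis by (simp add: c_def mult.assoc)
  qed
  have "ennreal \<bar>flow_integral T S m (\<lambda>z. \<phi> z * (1 - cutoff M (snd z)))\<bar>
      \<le> ennreal c * flow_nn_integral T S m (\<lambda>x. \<bar>x\<bar> powr q)"
  proof (rule abs_flow_integral_le[OF Vp S _ \<open>0 \<le> c\<close>])
    show "(\<lambda>x. \<bar>x\<bar> powr q) \<in> borel_measurable borel" by measurable
  qed (rule tail)
  also have "\<dots> \<le> ennreal c * ennreal K" using mom by (rule mult_left_mono) simp
  also have "\<dots> = ennreal (c * K)" using \<open>0 \<le> c\<close> by (rule ennreal_mult'[symmetric])
  finally show ?thesis using \<open>0 \<le> c\<close> \<open>0 \<le> K\<close> by (simp add: c_def)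
qed

lemma abs_mult_cutoff_le: "\<bar>f * cutoff M x\<bar> \<le> \<bar>f\<bar>" "\<bar>f * (1 - cutoff M x)\<bar> \<le> \<bar>f\<bar>"
  using cutoff_bounds[of M x] by (simp_all add: abs_mult mult_right_le_one_le)

lemma p_growth_mult_cutoff:
  assumes "p_growth p T S \<phi>"
  shows "p_growth p T S (\<lambda>z. \<phi> z * cutoff M (snd z))" "p_growth p T S (\<lambda>z. \<phi> z * (1 - cutoff M (snd z)))"
proof -
  obtain C where C: "\<forall>t\<in>{0..T}. \<forall>x\<in>S. \<bar>\<phi> (t, x)\<bar> \<le> C * (1 + \<bar>x\<bar> powr p)"
    and [measurable]: "\<phi> \<in> borel_measurable (restrict_space borel ({0..T} \<times> S))"
    using assms by (auto simp: p_growth_def)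
  have [measurable]: "(\<lambda>z. cutoff M (snd z)) \<in> borel_measurable (restrict_space borel ({0..T} \<times> S))"
    by (intro borel_measurable_continuous_on_restrict continuous_on_compose2[OF continuous_on_cutoff
          continuous_on_snd]) auto
  have bound: "\<bar>\<phi> (t, x) * w\<bar> \<le> C * (1 + \<bar>x\<bar> powr p)"
    if "t \<in> {0..T}" "x \<in> S" "\<bar>\<phi> (t, x) * w\<bar> \<le> \<bar>\<phi> (t, x)\<bar>" for t x w
  proof -
    have "\<bar>\<phi> (t, x)\<bar> \<le> C * (1 + \<bar>x\<bar> powr p)" using C that(1,2) by blast
    with that(3) show ?thesis by linarith
  qed
  show "p_growth p T S (\<lambda>z. \<phi> z * cutoff M (snd z))"
    by (rule p_growthI[where C = C]) (measurable, simp add: bound abs_mult_cutoff_le)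
  show "p_growth p T S (\<lambda>z. \<phi> z * (1 - cutoff M (snd z)))"
    by (rule p_growthI[where C = C]) (measurable, simp add: bound abs_mult_cutoff_le)
qed

lemma flow_integral_cutoff_tendsto:
  fixes ms :: "nat \<Rightarrow> real \<Rightarrow> real measure" and \<phi> :: "real \<times> real \<Rightarrow> real"
  assumes S: "closed S" and Vps: "\<And>k. Vp p T S (ms k)" and Vp: "Vp p T S m" and "0 \<le> p"
    and conv: "AE t in lborel. t \<in> {0..T} \<longrightarrow> conv_tau_p p S (\<lambda>k. ms k t) (m t)"
    and \<phi>_meas: "\<phi> \<in> borel_measurable (restrict_space borel ({0..T} \<times> S))"
    and \<phi>_cont: "\<forall>t\<in>{0..T}. continuous_on S (\<lambda>x. \<phi> (t, x))"
    and \<phi>_growth: "\<forall>t\<in>{0..T}. \<forall>x\<in>S. \<bar>\<phi> (t, x)\<bar> \<le> C * (1 + \<bar>x\<bar> powr p)"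
  shows "(\<lambda>k. flow_integral T S (ms k) (\<lambda>z. \<phi> z * cutoff M (snd z)))
    \<longlonglongrightarrow> flow_integral T S m (\<lambda>z. \<phi> z * cutoff M (snd z))"
proof (rule flow_integral_tendsto_bounded[OF S Vps Vp])
  have "p_growth p T S \<phi>" using \<phi>_meas \<phi>_growth by (blast intro: p_growthI)
  from p_growth_mult_cutoff(1)[OF this, where M = M]
  show "(\<lambda>z. \<phi> z * cutoff M (snd z)) \<in> borel_measurable (restrict_space borel ({0..T} \<times> S))"
    unfolding p_growth_def by blast
  have growth: "\<bar>\<phi> (t, x) * cutoff M x\<bar> \<le> C * (1 + \<bar>x\<bar> powr p)" if "t \<in> {0..T}" "x \<in> S" for t x
    using abs_mult_cutoff_le(1)[of "\<phi> (t, x)" M x] \<phi>_growth that by fastforce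
  show "\<bar>\<phi> (t, x) * cutoff M (snd (t, x))\<bar> \<le> \<bar>C\<bar> * (1 + (M + 1) powr p)"
    if "t \<in> {0..T}" "x \<in> S" for t x
  proof (cases "\<bar>x\<bar> \<le> M + 1")
    case True
    have "C * (1 + \<bar>x\<bar> powr p) \<le> \<bar>C\<bar> * (1 + \<bar>x\<bar> powr p)" by (intro mult_right_mono) auto
    also have "\<dots> \<le> \<bar>C\<bar> * (1 + (M + 1) powr p)"
      using True \<open>0 \<le> p\<close> by (intro mult_left_mono add_left_mono powr_mono2) auto
    finally show ?thesis using growth[OF that] by simp
  qed (simp add: cutoff_eq_zero)
  show "AE t in lborel. t \<in> {0..T} \<longrightarrow> (\<lambda>k. LINT x:S|ms k t. \<phi> (t, x) * cutoff M (snd (t, x)))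
      \<longlonglongrightarrow> (LINT x:S|m t. \<phi> (t, x) * cutoff M (snd (t, x)))"
    using conv
  proof eventually_elim
    case (elim t)
    show ?case
    proof
      assume t: "t \<in> {0..T}"
      have "continuous_on S (\<lambda>x. \<phi> (t, x) * cutoff M x)"
        using \<phi>_cont t by (intro continuous_on_mult continuous_on_cutoff) auto
      moreover have "\<forall>x\<in>S. \<bar>\<phi> (t, x) * cutoff M x\<bar> \<le> C * (1 + norm x powr p)"
        using growth[OF t] by simp
      ultimately have "(\<lambda>k. LINT x:S|ms k t. \<phi> (t, x) * cutoff M x) \<longlonglongrightarrow> (LINT x:S|m t. \<phi> (t, x) * cutoff M x)"
        using elim t unfolding conv_tau_p_def by blast
      then show "(\<lambda>k. LINT x:S|ms k t. \<phi> (t, x) * cutoff M (snd (t, x)))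
          \<longlonglongrightarrow> (LINT x:S|m t. \<phi> (t, x) * cutoff M (snd (t, x)))"
        by simp
    qed
  qed
qed simp

lemma flow_integral_tendsto_of_moment_bound:
  fixes ms :: "nat \<Rightarrow> real \<Rightarrow> real measure" and \<phi> :: "real \<times> real \<Rightarrow> real"
  assumes S: "closed S" and Vps: "\<And>k. Vp p T S (ms k)" and Vp: "Vp p T S m"
    and p: "0 \<le> p" "p < q" and "0 \<le> K"
    and mom_seq: "\<And>k. flow_nn_integral T S (ms k) (\<lambda>x. \<bar>x\<bar> powr q) \<le> ennreal K"
    and mom: "flow_nn_integral T S m (\<lambda>x. \<bar>x\<bar> powr q) \<le> ennreal K"
    and conv: "AE t in lborel. t \<in> {0..T} \<longrightarrow> conv_tau_p p S (\<lambda>k. ms k t) (m t)"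
    and \<phi>_meas: "\<phi> \<in> borel_measurable (restrict_space borel ({0..T} \<times> S))"
    and \<phi>_cont: "\<forall>t\<in>{0..T}. continuous_on S (\<lambda>x. \<phi> (t, x))"
    and \<phi>_growth: "\<forall>t\<in>{0..T}. \<forall>x\<in>S. \<bar>\<phi> (t, x)\<bar> \<le> C * (1 + \<bar>x\<bar> powr p)"
  shows "(\<lambda>k. flow_integral T S (ms k) \<phi>) \<longlonglongrightarrow> flow_integral T S m \<phi>"
proof (rule LIMSEQ_I)
  fix \<epsilon> :: real assume "0 < \<epsilon>"
  have "(\<lambda>n. 2 * \<bar>C\<bar> * (1 + real n) powr (- (q - p)) * K) \<longlonglongrightarrow> 2 * \<bar>C\<bar> * 0 * K"
    using p by (intro tendsto_intros tendsto_neg_powr filterlim_tendsto_add_at_top[OF tendsto_const]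
        filterlim_real_sequentially) auto
  then have "eventually (\<lambda>n. 2 * \<bar>C\<bar> * (1 + real n) powr (- (q - p)) * K < \<epsilon> / 3) sequentially"
    using \<open>0 < \<epsilon>\<close> by (intro order_tendstoD(2)) auto
  then obtain N where "2 * \<bar>C\<bar> * (1 + real N) powr (- (q - p)) * K < \<epsilon> / 3"
    by (auto simp: eventually_sequentially)
  moreover define M where "M = 1 + real N"
  ultimately have M: "1 \<le> M" and small: "2 * \<bar>C\<bar> * M powr (- (q - p)) * K < \<epsilon> / 3" by simp_all
  define \<phi>M \<rho> where "\<phi>M z = \<phi> z * cutoff M (snd z)" and "\<rho> z = \<phi> z * (1 - cutoff M (snd z))" for z
  have "p_growth p T S \<phi>" using \<phi>_meas \<phi>_growth by (blast intro: p_growthI)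
  have split: "flow_integral T S m' \<phi> = flow_integral T S m' \<phi>M + flow_integral T S m' \<rho>"
    if "Vp p T S m'" for m'
    using flow_integral_add[OF that S p_growth_mult_cutoff[OF \<open>p_growth p T S \<phi>\<close>, where M = M]]
    by (simp add: \<phi>M_def[abs_def] \<rho>_def[abs_def] algebra_simps)
  have tail_seq: "\<bar>flow_integral T S (ms k) \<rho>\<bar> < \<epsilon> / 3" for k
    using abs_flow_integral_tail_le[OF Vps[of k] S p M \<phi>_growth mom_seq[of k] \<open>0 \<le> K\<close>] small
    unfolding \<rho>_def by linarith
  have tail: "\<bar>flow_integral T S m \<rho>\<bar> < \<epsilon> / 3"
    using abs_flow_integral_tail_le[OF Vp S p M \<phi>_growth mom \<open>0 \<le> K\<close>] small
    unfolding \<rho>_def by linarith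
  have "(\<lambda>k. flow_integral T S (ms k) \<phi>M) \<longlonglongrightarrow> flow_integral T S m \<phi>M"
    unfolding \<phi>M_def[abs_def] by (rule flow_integral_cutoff_tendsto[OF S Vps Vp p(1) conv \<phi>_meas \<phi>_cont \<phi>_growth])
  from LIMSEQ_D[OF this, of "\<epsilon> / 3"] \<open>0 < \<epsilon>\<close>
  obtain k0 where k0: "\<And>k. k \<ge> k0 \<Longrightarrow> \<bar>flow_integral T S (ms k) \<phi>M - flow_integral T S m \<phi>M\<bar> < \<epsilon> / 3"
    by auto
  show "\<exists>k0. \<forall>k\<ge>k0. norm (flow_integral T S (ms k) \<phi> - flow_integral T S m \<phi>) < \<epsilon>"
  proof (intro exI allI impI)
    fix k assume "k0 \<le> k"
    from k0[OF this] tail_seq[of k] tail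
    show "norm (flow_integral T S (ms k) \<phi> - flow_integral T S m \<phi>) < \<epsilon>"
      unfolding split[OF Vps] split[OF Vp] real_norm_def abs_less_iff by linarith
  qed
qed

lemma LIMSEQ_of_subseq_subseq:
  fixes X :: "nat \<Rightarrow> 'a::metric_space"
  assumes "\<And>r :: nat \<Rightarrow> nat. strict_mono r \<Longrightarrow>
    \<exists>r' :: nat \<Rightarrow> nat. strict_mono r' \<and> (\<lambda>k. X (r (r' k))) \<longlonglongrightarrow> L"
  shows "X \<longlonglongrightarrow> L"
proof (rule ccontr)
  assume "\<not> X \<longlonglongrightarrow> L"
  then have "\<exists>\<epsilon>>0. \<forall>N. \<exists>n\<ge>N. \<epsilon> \<le> dist (X n) L"
    unfolding lim_sequentially by (simp add: not_less)
  then obtain \<epsilon> where "0 < \<epsilon>" and "\<forall>N. \<exists>n\<ge>N. \<epsilon> \<le> dist (X n) L" by blast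
  then have "infinite {n. \<epsilon> \<le> dist (X n) L}" by (simp add: infinite_nat_iff_unbounded_le)
  from infinite_enumerate[OF this] obtain r :: "nat \<Rightarrow> nat" where r: "strict_mono r"
    and r_far: "\<And>n. \<epsilon> \<le> dist (X (r n)) L"
    by auto
  obtain r' where "(\<lambda>k. X (r (r' k))) \<longlonglongrightarrow> L" using assms[OF r] by blast
  from tendstoD[OF this \<open>0 < \<epsilon>\<close>] obtain k where "dist (X (r (r' k))) L < \<epsilon>"
    by (auto simp: eventually_sequentially)
  with r_far[of "r' k"] show False by simp
qed

lemma conv_stable_of_conv_in_measure:
  fixes ms :: "nat \<Rightarrow> real \<Rightarrow> real measure"
  assumes S: "closed S" and Vps: "\<And>n. Vp p T S (ms n)" and Vp: "Vp p T S m"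
    and p: "0 \<le> p" "p < q" and "0 \<le> K"
    and mom_seq: "\<And>n. flow_nn_integral T S (ms n) (\<lambda>x. \<bar>x\<bar> powr q) \<le> ennreal K"
    and mom: "flow_nn_integral T S m (\<lambda>x. \<bar>x\<bar> powr q) \<le> ennreal K"
    and conv: "conv_in_measure p T S ms m"
  shows "conv_stable p T S ms m"
  unfolding conv_stable_def
proof (intro allI impI, elim conjE)
  fix \<phi> :: "real \<times> real \<Rightarrow> real" and C :: real
  assume \<phi>: "\<phi> \<in> borel_measurable (restrict_space borel ({0..T} \<times> S))"
    "\<forall>t\<in>{0..T}. continuous_on S (\<lambda>x. \<phi> (t, x))"
    "\<forall>t\<in>{0..T}. \<forall>x\<in>S. \<bar>\<phi> (t, x)\<bar> \<le> C * (1 + \<bar>x\<bar> powr p)"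
  have "(\<lambda>n. flow_integral T S (ms n) \<phi>) \<longlonglongrightarrow> flow_integral T S m \<phi>"
  proof (rule LIMSEQ_of_subseq_subseq)
    fix r :: "nat \<Rightarrow> nat" assume "strict_mono r"
    with conv obtain r' :: "nat \<Rightarrow> nat" where "strict_mono r'"
      and ae: "AE t in lborel. t \<in> {0..T} \<longrightarrow> conv_tau_p p S (\<lambda>k. ms (r (r' k)) t) (m t)"
      unfolding conv_in_measure_def by blast
    have "(\<lambda>k. flow_integral T S (ms (r (r' k))) \<phi>) \<longlonglongrightarrow> flow_integral T S m \<phi>"
      by (rule flow_integral_tendsto_of_moment_bound[OF S Vps Vp p \<open>0 \<le> K\<close> mom_seq mom ae \<phi>])
    with \<open>strict_mono r'\<close> show "\<exists>r'. strict_mono r' \<and> (\<lambda>k. flow_integral T S (ms (r (r' k))) \<phi>) \<longlonglongrightarrow> flow_integral T S m \<phi>"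
      by blast
  qed
  then show "(\<lambda>n. LINT t:{0..T}|lborel. (LINT x:S|ms n t. \<phi> (t, x)))
      \<longlonglongrightarrow> (LINT t:{0..T}|lborel. (LINT x:S|m t. \<phi> (t, x)))"
    by (simp add: flow_integral_def)
qed

theorem mainTheorem6:
  fixes T p q r c1 :: real and Ob :: "real set" and m0 :: "real measure"
    and b \<sigma> :: "real \<Rightarrow> real \<Rightarrow> real"
    and \<mu>s :: "nat \<Rightarrow> (real \<times> real) measure" and ms :: "nat \<Rightarrow> real \<Rightarrow> real measure"
    and \<mu> :: "(real \<times> real) measure" and m :: "real \<Rightarrow> real measure"
  assumes T_pos: "T > 0" and O_open: "open Ob"
    and r_range: "0 \<le> r" "r \<le> 2" and q_ge: "q \<ge> 2" and pq: "q > p" and p_ge: "p \<ge> max 1 r"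
    and S1: "prob_space m0" "sets m0 = sets borel" "emeasure m0 (UNIV - closure Ob) = 0"
            "integrable m0 (\<lambda>x. \<bar>x\<bar> powr q)"
    and S2_meas: "(\<lambda>z. b (fst z) (snd z)) \<in> borel_measurable (restrict_space borel ({0..T} \<times> UNIV))"
                 "(\<lambda>z. \<sigma> (fst z) (snd z)) \<in> borel_measurable (restrict_space borel ({0..T} \<times> UNIV))"
    and S2_cont: "\<forall>t\<in>{0..T}. continuous_on UNIV (b t) \<and> continuous_on UNIV (\<sigma> t)"
    and S2_lip: "\<forall>t\<in>{0..T}. \<forall>x y. \<bar>b t x - b t y\<bar> + \<bar>\<sigma> t x - \<sigma> t y\<bar> \<le> c1 * \<bar>x - y\<bar>"
    and S2_growth: "\<forall>t\<in>{0..T}. \<forall>x. \<bar>b t x\<bar> \<le> c1 * (1 + \<bar>x\<bar>)"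
                   "\<forall>t\<in>{0..T}. \<forall>x. (\<sigma> t x)\<^sup>2 \<le> c1 * (1 + mpow \<bar>x\<bar> r)"
    and S4: "(\<exists>(M::'w measure) F X. mp_solution T b \<sigma> m0 M F X
                 \<and> (AE \<omega> in M. \<forall>t\<in>{0..<T}. X \<omega> t \<in> Ob))
           \<or> ((\<exists>a c. a < c \<and> Ob = {a<..<c})
               \<and> (\<exists>c\<sigma>>0. \<forall>t\<in>{0..T}. \<forall>x. (\<sigma> t x)\<^sup>2 \<ge> c\<sigma>))"
    and in_R: "\<forall>n. inR p T Ob m0 b \<sigma> (\<mu>s n) (ms n)" "inR p T Ob m0 b \<sigma> \<mu> m"
    and conv_mu: "conv_tau_p p ({0..T} \<times> closure Ob) \<mu>s \<mu>"
    and conv_m: "conv_in_measure p T (closure Ob) ms m"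
  shows "conv_tau_p p ({0..T} \<times> closure Ob) \<mu>s \<mu> \<and> conv_stable p T (closure Ob) ms m"
proof -
  have "0 \<in> {0..T}" using T_pos by simp
  with S2_growth(1) have "\<bar>b 0 0\<bar> \<le> c1 * (1 + \<bar>0\<bar>)" by blast
  then have c1: "0 \<le> c1" using abs_ge_zero[of "b 0 0"] by simp
  obtain K where "0 \<le> K" and moment: "\<And>\<mu> m. inR p T Ob m0 b \<sigma> \<mu> m \<Longrightarrow>
      flow_nn_integral T (closure Ob) m (\<lambda>x. \<bar>x\<bar> powr q) \<le> ennreal K"
    using inR_uniform_moment_bound[OF q_ge r_range p_ge c1 S1(1,2,4) S2_meas S2_growth] by blast
  have Vp: "Vp p T (closure Ob) (ms n)" "Vp p T (closure Ob) m" for n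
    using in_R by (simp_all add: inR_def)
  have "0 \<le> p" "p < q" using p_ge pq by auto
  from conv_stable_of_conv_in_measure[OF closed_closure Vp this \<open>0 \<le> K\<close>
      moment[OF in_R(1)[rule_format]] moment[OF in_R(2)] conv_m]
  have "conv_stable p T (closure Ob) ms m" .
  with conv_mu show ?thesis by blast
qed

end
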